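(* Let $F\in\mathbf F$ satisfy conditions $\mathbf{KP}$ and $\mathbf{HN^0}$. Then $A_T(F)$ is closed in probability, i.e. if $(g^n)_{n\ge1}\subset A_T(F)$ converges in probability (equivalently, along a subsequence a.s.) to some $g\in L^0(\mathbb R^d;\mathcal F)$, then $g\in A_T(F)$.
   Context: Fix $T\in\mathbb N$, $\mathbb T=\{0,\dots,T\}$, $d\ge1$, a complete probability space $(\Omega,\mathcal F,\mathbb P)$ and a filtration $\mathbb H=(\mathcal H_t)_{t\in\mathbb T}$ with $\mathcal H_T\subset\mathcal F$ (no other relation between $\mathbb H$ and the other processes is assumed). Equalities and inequalities between random variables are understood $\mathbb P$-a.s. $\mathbb M^d$ denotes the real $d\times d$ matrices, $\mathbb M^d_+$ those with nonnegative entries, and $e_{ij}$ the matrix whose $(i,j)$ entry is $1$ and all other entries $0$. For $E\subset\mathbb M^d$ (or $E\subset\mathbb R^d$) and a $\sigma$-algebra $\mathcal G\subset\mathcal F$, $L^0(E;\mathcal G)$ is the set of $E$-valued $\mathcal G$-measurable random variables; $L^1(\mathbb R^d;\mathcal F)$ and $L^\infty(\mathbb R^d;\mathcal F)$ are the integrable, resp. bounded, elements of $L^0(\mathbb R^d;\mathcal F)$. A closed convex cone $\mathcal A\subset\mathbb M^d$ is fixed; $\mathbb L^0(\mathcal A;\mathbb H)$ denotes the set of $\mathcal A$-valued $\mathbb H$-adapted processes $(\eta_t)_{t\in\mathbb T}$. $\mathbb F$ is the set of continuous maps $f:\mathbb M^d\to\mathbb R^d$ such that (HF1) $f(\lambda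 a)=\lambda f(a)$ for all $\lambda\ge0$, $a\in\mathbb M^d$; (HF2) $f(\lambda a+\beta a')-(\lambda f(a)+\beta f(a'))\in\mathbb R^d_+$ for all $\lambda,\beta\ge0$, $a,a'\in\mathcal A$. $\mathbf F$ is the set of sequences $F=(F_t)_{t\in\mathbb T}$ of $\mathcal F$-measurable random maps $F_t:\Omega\times\mathbb M^d\to\mathbb R^d$ with $F_t(\omega,\cdot)\in\mathbb F$ for a.e. $\omega$ (no adaptedness to $\mathbb H$ is assumed); for a random matrix $\eta$, $F_t(\eta)(\omega)=F_t(\omega,\eta(\omega))$. $N_t(F)=\{F_t(\eta):\eta\in L^0(\mathcal A;\mathcal H_t)\}$, $N^0_t(F)=N_t(F)\cap(-N_t(F))$. For a process $\xi=(\xi_t)_{t\in\mathbb T}$, "$\xi\in N(F)$" means $\xi_t\in N_t(F)$ for all $t$, and "$\xi\in N^0(F)$" means $\xi_t\in N^0_t(F)$ for all $t$. $V_t(\xi)=\sum_{s=0}^t\xi_s$ and $A_t(F)=\{V_t(\xi)-r:\ \xi\in N(F),\ r\in L^0(\mathbb R^d_+;\mathcal F)\}$. Condition $\mathbf{KP}$: for all $\xi,\tilde\xi\in N(F)$, $V_T(\xi)+V_T(\tilde\xi)\in L^0(\mathbb R^d_+;\mathcal F)$ implies $\xi\in N^0(F)$ and $V_T(\xi)+V_T(\tilde\xi)=0$. Condition $\mathbf{HN^0}$: for all $t\in\mathbb T$ and $\eta\in L^0(\mathcal A;\mathcal H_t)$, $F_t(\eta)\in N^0_t(F)$ implies $F_t(-\eta)=-F_t(\eta)$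 and $-\eta\in L^0(\mathcal A;\mathcal H_t)$. *)

theory Defs
  imports "HOL-Probability.Probability"
begin

type_synonym 'd mat = "real^'d^'d"
type_synonym 'd vect = "real^'d"

definition nonneg_vec :: "real^'d \<Rightarrow> bool" where
  "nonneg_vec x \<longleftrightarrow> (\<forall>i. 0 \<le> x $ i)"

definition classF :: "('d::finite) mat set \<Rightarrow> ('d mat \<Rightarrow> 'd vect) set" where
  "classF A = {f. continuous_on UNIV f
     \<and> (\<forall>c::real. \<forall>a. c \<ge> 0 \<longrightarrow> f (c *\<^sub>R a) = c *\<^sub>R f a)
     \<and> (\<forall>c b a a'. c \<ge> 0 \<longrightarrow> b \<ge> 0 \<longrightarrow> a \<in> A \<longrightarrow> a' \<in> A \<longrightarrow>
          nonneg_vec (f (c *\<^sub>R a + b *\<^sub>R a') - (c *\<^sub>R f a + b *\<^sub>R f a')))}"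

definition randomF :: "'w measure \<Rightarrow> ('d::finite) mat set \<Rightarrow> (nat \<Rightarrow> 'w \<Rightarrow> 'd mat \<Rightarrow> 'd vect) \<Rightarrow> bool" where
  "randomF M A F \<longleftrightarrow> (\<forall>t a. (\<lambda>\<omega>. F t \<omega> a) \<in> borel_measurable M)
     \<and> (\<forall>t. AE \<omega> in M. F t \<omega> \<in> classF A)"

definition L0A :: "'w measure \<Rightarrow> (nat \<Rightarrow> 'w measure) \<Rightarrow> ('d::finite) mat set \<Rightarrow> nat \<Rightarrow> ('w \<Rightarrow> 'd mat) set" where
  "L0A M H A t = {\<eta>. \<eta> \<in> borel_measurable (H t) \<and> (\<forall>\<omega>\<in>space M. \<eta> \<omega> \<in> A)}"

definition inN :: "'w measure \<Rightarrow> (nat \<Rightarrow> 'w measure) \<Rightarrow> ('d::finite) mat set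
    \<Rightarrow> (nat \<Rightarrow> 'w \<Rightarrow> 'd mat \<Rightarrow> 'd vect) \<Rightarrow> nat \<Rightarrow> ('w \<Rightarrow> 'd vect) \<Rightarrow> bool" where
  "inN M H A F t \<xi> \<longleftrightarrow> (\<exists>\<eta>\<in>L0A M H A t. AE \<omega> in M. \<xi> \<omega> = F t \<omega> (\<eta> \<omega>))"

definition inN0 :: "'w measure \<Rightarrow> (nat \<Rightarrow> 'w measure) \<Rightarrow> ('d::finite) mat set
    \<Rightarrow> (nat \<Rightarrow> 'w \<Rightarrow> 'd mat \<Rightarrow> 'd vect) \<Rightarrow> nat \<Rightarrow> ('w \<Rightarrow> 'd vect) \<Rightarrow> bool" where
  "inN0 M H A F t \<xi> \<longleftrightarrow> inN M H A F t \<xi> \<and> inN M H A F t (\<lambda>\<omega>. - \<xi> \<omega>)"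

definition V :: "(nat \<Rightarrow> 'w \<Rightarrow> 'd vect) \<Rightarrow> nat \<Rightarrow> 'w \<Rightarrow> ('d::finite) vect" where
  "V \<xi> t = (\<lambda>\<omega>. \<Sum>s\<le>t. \<xi> s \<omega>)"

definition inNproc :: "'w measure \<Rightarrow> (nat \<Rightarrow> 'w measure) \<Rightarrow> ('d::finite) mat set
    \<Rightarrow> (nat \<Rightarrow> 'w \<Rightarrow> 'd mat \<Rightarrow> 'd vect) \<Rightarrow> nat \<Rightarrow> (nat \<Rightarrow> 'w \<Rightarrow> 'd vect) \<Rightarrow> bool" where
  "inNproc M H A F T \<xi> \<longleftrightarrow> (\<forall>t\<le>T. inN M H A F t (\<xi> t))"

definition inN0proc :: "'w measure \<Rightarrow> (nat \<Rightarrow> 'w measure) \<Rightarrow> ('d::finite) mat set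
    \<Rightarrow> (nat \<Rightarrow> 'w \<Rightarrow> 'd mat \<Rightarrow> 'd vect) \<Rightarrow> nat \<Rightarrow> (nat \<Rightarrow> 'w \<Rightarrow> 'd vect) \<Rightarrow> bool" where
  "inN0proc M H A F T \<xi> \<longleftrightarrow> (\<forall>t\<le>T. inN0 M H A F t (\<xi> t))"

definition inAT :: "'w measure \<Rightarrow> (nat \<Rightarrow> 'w measure) \<Rightarrow> ('d::finite) mat set
    \<Rightarrow> (nat \<Rightarrow> 'w \<Rightarrow> 'd mat \<Rightarrow> 'd vect) \<Rightarrow> nat \<Rightarrow> ('w \<Rightarrow> 'd vect) \<Rightarrow> bool" where
  "inAT M H A F T g \<longleftrightarrow> g \<in> borel_measurable M \<and>
     (\<exists>\<xi> r. inNproc M H A F T \<xi> \<and> r \<in> borel_measurable M \<and> (\<forall>\<omega>\<in>space M. nonneg_vec (r \<omega>))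
        \<and> (AE \<omega> in M. g \<omega> = V \<xi> T \<omega> - r \<omega>))"

definition KP :: "'w measure \<Rightarrow> (nat \<Rightarrow> 'w measure) \<Rightarrow> ('d::finite) mat set
    \<Rightarrow> (nat \<Rightarrow> 'w \<Rightarrow> 'd mat \<Rightarrow> 'd vect) \<Rightarrow> nat \<Rightarrow> bool" where
  "KP M H A F T \<longleftrightarrow> (\<forall>\<xi> \<xi>'. inNproc M H A F T \<xi> \<longrightarrow> inNproc M H A F T \<xi>' \<longrightarrow>
      (AE \<omega> in M. nonneg_vec (V \<xi> T \<omega> + V \<xi>' T \<omega>)) \<longrightarrow>
      inN0proc M H A F T \<xi> \<and> (AE \<omega> in M. V \<xi> T \<omega> + V \<xi>' T \<omega> = 0))"

definition HN0 :: "'w measure \<Rightarrow> (nat \<Rightarrow> 'w measure) \<Rightarrow> ('d::finite) mat set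
    \<Rightarrow> (nat \<Rightarrow> 'w \<Rightarrow> 'd mat \<Rightarrow> 'd vect) \<Rightarrow> nat \<Rightarrow> bool" where
  "HN0 M H A F T \<longleftrightarrow> (\<forall>t\<le>T. \<forall>\<eta>\<in>L0A M H A t.
      inN0 M H A F t (\<lambda>\<omega>. F t \<omega> (\<eta> \<omega>)) \<longrightarrow>
      (AE \<omega> in M. F t \<omega> (- \<eta> \<omega>) = - F t \<omega> (\<eta> \<omega>)) \<and> (AE \<omega> in M. - \<eta> \<omega> \<in> A))"

definition conv_in_prob :: "'w measure \<Rightarrow> (nat \<Rightarrow> 'w \<Rightarrow> 'd vect) \<Rightarrow> ('w \<Rightarrow> ('d::finite) vect) \<Rightarrow> bool" where
  "conv_in_prob M g h \<longleftrightarrow> (\<forall>\<epsilon>>0. (\<lambda>n. measure M {\<omega>\<in>space M. dist (g n \<omega>) (h \<omega>) > \<epsilon>}) \<longlonglongrightarrow> 0)"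

end

theory Submission
  imports Defs
begin

(*
  An element of A_T(F) is a random vector dominated by F_0(eta_0) + ... + F_T(eta_T) for controls
  eta_t in L^0(A; H_t), and conversely. By backward induction on s, the random vectors dominated by
  F_s(eta_s) + ... + F_T(eta_T) form a set closed under a.s. convergence. In the induction step one
  passes to a measurably chosen random subsequence along which the controls eta^n_s converge
  wherever they do not diverge. Where they diverge, normalising by |eta^n_s| and passing to the
  limit gives a unit vector u such that -F_s(u) is dominated by the later pay-offs. By KP the
  resulting strategy has zero total pay-off and by HN0 it is symmetric, so the controls can be
  shifted along it, removing their component along u without decreasing the pay-off; an inner
  induction on the dimension of the span of the eta^n_s concludes. Convergence in probability
  supplies an a.s. convergent subsequence.
*)

section \<open>Random subsequences\<close>

definition random_subseq :: "'w measure \<Rightarrow> (nat \<Rightarrow> 'w \<Rightarrow> nat) \<Rightarrow> bool" where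
  "random_subseq G \<tau> \<longleftrightarrow>
     (\<forall>k. \<tau> k \<in> G \<rightarrow>\<^sub>M count_space UNIV) \<and> (\<forall>\<omega>\<in>space G. strict_mono (\<lambda>k. \<tau> k \<omega>))"

lemma random_subseq_id: "random_subseq G (\<lambda>k \<omega>. k)"
  by (simp add: random_subseq_def strict_mono_def)

lemma measurable_random_subseq:
  assumes "random_subseq G \<tau>" and "\<And>n. X n \<in> G \<rightarrow>\<^sub>M N"
  shows "(\<lambda>\<omega>. X (\<tau> k \<omega>) \<omega>) \<in> G \<rightarrow>\<^sub>M N"
  by (rule measurable_compose_countable[where f = X]) (use assms in \<open>auto simp: random_subseq_def\<close>)

lemma random_subseq_comp:
  assumes \<tau>: "random_subseq G \<tau>" and \<sigma>: "random_subseq G \<sigma>"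
  shows "random_subseq G (\<lambda>k \<omega>. \<tau> (\<sigma> k \<omega>) \<omega>)"
  unfolding random_subseq_def
proof (intro conjI allI ballI)
  show "(\<lambda>\<omega>. \<tau> (\<sigma> k \<omega>) \<omega>) \<in> G \<rightarrow>\<^sub>M count_space UNIV" for k
    by (rule measurable_random_subseq[OF \<sigma>]) (use \<tau> in \<open>simp add: random_subseq_def\<close>)
  show "strict_mono (\<lambda>k. \<tau> (\<sigma> k \<omega>) \<omega>)" if "\<omega> \<in> space G" for \<omega>
    using strict_mono_o[of "\<lambda>k. \<tau> k \<omega>" "\<lambda>k. \<sigma> k \<omega>"] \<tau> \<sigma> that
    by (simp add: random_subseq_def o_def)
qed

lemma random_subseq_LIMSEQ:
  assumes "random_subseq G \<tau>" and "\<omega> \<in> space G" and "X \<longlonglongrightarrow> l"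
  shows "(\<lambda>k. X (\<tau> k \<omega>)) \<longlonglongrightarrow> l"
  using LIMSEQ_subseq_LIMSEQ[OF assms(3)] assms(1,2) by (simp add: random_subseq_def o_def)

primrec select_index :: "(nat \<Rightarrow> nat \<Rightarrow> 'w \<Rightarrow> bool) \<Rightarrow> nat \<Rightarrow> 'w \<Rightarrow> nat" where
  "select_index P 0 \<omega> = (LEAST n. P 0 n \<omega>)"
| "select_index P (Suc k) \<omega> = (LEAST n. select_index P k \<omega> < n \<and> P (Suc k) n \<omega>)"

lemma random_subseq_select_index:
  assumes meas: "\<And>k n. Measurable.pred G (P k n)"
    and freq: "\<And>\<omega> k N. \<omega> \<in> space G \<Longrightarrow> \<exists>n\<ge>N. P k n \<omega>"
  shows "random_subseq G (select_index P)"
    and "\<And>\<omega> k. \<omega> \<in> space G \<Longrightarrow> P k (select_index P k \<omega>) \<omega>"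
proof -
  have "select_index P k \<in> G \<rightarrow>\<^sub>M count_space UNIV" for k
  proof (induction k)
    case 0
    show ?case using meas by (simp add: measurable_Least)
  next
    case (Suc k)
    note [measurable] = Suc meas
    show ?case by simp
  qed
  moreover have selected: "P k (select_index P k \<omega>) \<omega>
      \<and> select_index P k \<omega> < select_index P (Suc k) \<omega>"
    if \<omega>: "\<omega> \<in> space G" for \<omega> k
  proof
    have later: "\<exists>n. m < n \<and> P j n \<omega>" for m j
    proof -
      obtain n where "Suc m \<le> n" and "P j n \<omega>"
        using freq[OF \<omega>, where k = j and N = "Suc m"] by blast
      then show ?thesis
        by (intro exI[of _ n]) simp
    qed
    show "P k (select_index P k \<omega>) \<omega>"
    proof (cases k)
      case 0
      have "\<exists>n. P 0 n \<omega>"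
        using later[of 0 0] by blast
      with 0 show ?thesis
        using LeastI_ex by simp
    next
      case (Suc j)
      then show ?thesis using LeastI_ex[OF later[of "select_index P j \<omega>" k]] by simp
    qed
    show "select_index P k \<omega> < select_index P (Suc k) \<omega>"
      using LeastI_ex[OF later[of "select_index P k \<omega>" "Suc k"]] by simp
  qed
  moreover have "strict_mono (\<lambda>k. select_index P k \<omega>)" if "\<omega> \<in> space G" for \<omega>
    using selected[OF that] by (intro strict_monoI_Suc) blast
  ultimately show "random_subseq G (select_index P)"
    unfolding random_subseq_def by blast
  show "P k (select_index P k \<omega>) \<omega>" if "\<omega> \<in> space G" for \<omega> k
    using selected[OF that] by blast
qed

lemma LIMSEQ_dist_less_inverse_Suc:
  assumes "\<And>k. dist (X k) l < 1 / real (Suc k)"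
  shows "X \<longlonglongrightarrow> l"
proof (rule tendsto_dist_iff[THEN iffD2])
  have le: "\<forall>k. norm (dist (X k) l) \<le> 1 / real (Suc k)"
  proof
    fix k
    show "norm (dist (X k) l) \<le> 1 / real (Suc k)"
      using assms[of k] by simp
  qed
  have "(\<lambda>k. 1 / real (Suc k)) \<longlonglongrightarrow> 0"
    by (rule LIMSEQ_Suc[OF lim_const_over_n])
  then show "(\<lambda>k. dist (X k) l) \<longlonglongrightarrow> 0"
    by (rule Lim_null_comparison[OF always_eventually[OF le]])
qed

text \<open>The limit superior is a measurable target for the selected subsequence.\<close>
lemma random_subseq_convergent_real:
  fixes Z :: "nat \<Rightarrow> 'w \<Rightarrow> real"
  assumes [measurable]: "\<And>n. Z n \<in> borel_measurable G"
    and bounded: "\<And>\<omega>. \<omega> \<in> space G \<Longrightarrow> bounded (range (\<lambda>n. Z n \<omega>))"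
  shows "\<exists>\<tau>. random_subseq G \<tau> \<and> (\<forall>\<omega>\<in>space G. convergent (\<lambda>k. Z (\<tau> k \<omega>) \<omega>))"
proof -
  define c where "c \<omega> = real_of_ereal (limsup (\<lambda>n. ereal (Z n \<omega>)))" for \<omega>
  have [measurable]: "c \<in> borel_measurable G"
    unfolding c_def by measurable
  have cluster: "\<exists>n\<ge>N. dist (Z n \<omega>) (c \<omega>) < e" if \<omega>: "\<omega> \<in> space G" and "e > 0" for \<omega> N e
  proof -
    obtain K where "\<forall>n. \<bar>Z n \<omega>\<bar> \<le> K"
      using bounded[OF \<omega>] unfolding bounded_iff by auto
    then have K: "Z n \<omega> \<le> K" "- K \<le> Z n \<omega>" for n
      using abs_le_D1[of "Z n \<omega>" K] abs_le_D2[of "Z n \<omega>" K] by auto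
    define L where "L = limsup (\<lambda>n. ereal (Z n \<omega>))"
    obtain r where "strict_mono r" and "((\<lambda>n. ereal (Z n \<omega>)) \<circ> r) \<longlonglongrightarrow> L"
      using limsup_subseq_lim[of "\<lambda>n. ereal (Z n \<omega>)"] unfolding L_def by blast
    then have r: "strict_mono r" "(\<lambda>n. ereal (Z (r n) \<omega>)) \<longlonglongrightarrow> L"
      by (simp_all add: o_def)
    have "L \<le> ereal K"
      by (rule LIMSEQ_le_const2[OF r(2)]) (simp add: K)
    moreover have "ereal (- K) \<le> L"
      by (rule LIMSEQ_le_const[OF r(2)]) (simp add: K)
    ultimately have "L = ereal (c \<omega>)"
      unfolding c_def L_def[symmetric] by (cases L) auto
    with r(2) have "(\<lambda>n. Z (r n) \<omega>) \<longlonglongrightarrow> c \<omega>"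
      by (simp add: lim_ereal)
    then obtain M where "\<And>n. n \<ge> M \<Longrightarrow> dist (Z (r n) \<omega>) (c \<omega>) < e"
      using \<open>e > 0\<close> by (auto simp: lim_sequentially)
    then show ?thesis
      using seq_suble[OF r(1), of "max M N"] by (intro exI[of _ "r (max M N)"]) auto
  qed
  define P where "P k n \<omega> \<longleftrightarrow> dist (Z n \<omega>) (c \<omega>) < 1 / real (Suc k)" for k n \<omega>
  have "Measurable.pred G (P k n)" for k n
    unfolding P_def by measurable
  moreover have "\<exists>n\<ge>N. P k n \<omega>" if "\<omega> \<in> space G" for \<omega> k N
    unfolding P_def by (rule cluster[OF that]) simp
  ultimately have \<tau>: "random_subseq G (select_index P)"
    and close: "\<And>\<omega> k. \<omega> \<in> space G \<Longrightarrow> P k (select_index P k \<omega>) \<omega>"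
    using random_subseq_select_index[where G = G and P = P] by blast+
  show ?thesis
  proof (intro exI[of _ "select_index P"] conjI \<tau> ballI)
    fix \<omega> assume "\<omega> \<in> space G"
    then have "(\<lambda>k. Z (select_index P k \<omega>) \<omega>) \<longlonglongrightarrow> c \<omega>"
      by (intro LIMSEQ_dist_less_inverse_Suc) (use close in \<open>simp add: P_def\<close>)
    then show "convergent (\<lambda>k. Z (select_index P k \<omega>) \<omega>)"
      by (auto simp: convergent_def)
  qed
qed

lemma convergent_componentwiseI:
  fixes v :: "nat \<Rightarrow> 'a::euclidean_space"
  assumes "\<And>b. b \<in> Basis \<Longrightarrow> convergent (\<lambda>k. v k \<bullet> b)"
  shows "convergent v"
proof -
  define l where "l = (\<Sum>b\<in>Basis. lim (\<lambda>k. v k \<bullet> b) *\<^sub>R b)"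
  have "v \<longlonglongrightarrow> l"
  proof (rule iffD2[OF tendsto_componentwise_iff], intro ballI)
    fix b :: 'a assume b: "b \<in> Basis"
    have "l \<bullet> b = lim (\<lambda>k. v k \<bullet> b)"
      unfolding l_def using b by (simp add: inner_sum_left_Basis)
    then show "(\<lambda>k. v k \<bullet> b) \<longlonglongrightarrow> l \<bullet> b"
      using assms[OF b] convergent_LIMSEQ_iff by metis
  qed
  then show ?thesis
    unfolding convergent_def by blast
qed

lemma random_subseq_convergent_bounded:
  fixes Y :: "nat \<Rightarrow> 'w \<Rightarrow> 'a::euclidean_space"
  assumes meas[measurable]: "\<And>n. Y n \<in> borel_measurable G"
    and bounded: "\<And>\<omega>. \<omega> \<in> space G \<Longrightarrow> bounded (range (\<lambda>n. Y n \<omega>))"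
  shows "\<exists>\<tau>. random_subseq G \<tau> \<and> (\<forall>\<omega>\<in>space G. convergent (\<lambda>k. Y (\<tau> k \<omega>) \<omega>))"
proof -
  have componentwise: "\<exists>\<tau>. random_subseq G \<tau> \<and> (\<forall>\<omega>\<in>space G. \<forall>b\<in>B. convergent (\<lambda>k. Y (\<tau> k \<omega>) \<omega> \<bullet> b))"
    if "finite B" for B
    using that
  proof (induction B rule: finite_induct)
    case empty
    show ?case
      by (intro exI[of _ "\<lambda>k \<omega>. k"]) (simp add: random_subseq_id)
  next
    case (insert b B)
    then obtain \<tau> where \<tau>: "random_subseq G \<tau>"
      and conv: "\<forall>\<omega>\<in>space G. \<forall>c\<in>B. convergent (\<lambda>k. Y (\<tau> k \<omega>) \<omega> \<bullet> c)"
      by blast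
    have sub_meas: "(\<lambda>\<omega>. Y (\<tau> k \<omega>) \<omega> \<bullet> b) \<in> borel_measurable G" for k
      by (rule measurable_random_subseq[OF \<tau>, where X = "\<lambda>n \<omega>. Y n \<omega> \<bullet> b"]) measurable
    have sub_bounded: "bounded (range (\<lambda>k. Y (\<tau> k \<omega>) \<omega> \<bullet> b))" if \<omega>: "\<omega> \<in> space G" for \<omega>
    proof -
      obtain K where K: "\<And>n. norm (Y n \<omega>) \<le> K"
        using bounded[OF \<omega>] unfolding bounded_iff by blast
      have "\<bar>Y n \<omega> \<bullet> b\<bar> \<le> K * norm b" for n
        using Cauchy_Schwarz_ineq2[of "Y n \<omega>" b] mult_right_mono[OF K[of n] norm_ge_zero[of b]]
        by linarith
      then show ?thesis
        unfolding bounded_iff by (intro exI[of _ "K * norm b"]) auto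
    qed
    obtain \<sigma> where \<sigma>: "random_subseq G \<sigma>"
      and conv_b: "\<forall>\<omega>\<in>space G. convergent (\<lambda>k. Y (\<tau> (\<sigma> k \<omega>) \<omega>) \<omega> \<bullet> b)"
      using random_subseq_convergent_real[where Z = "\<lambda>k \<omega>. Y (\<tau> k \<omega>) \<omega> \<bullet> b",
        OF sub_meas sub_bounded] by blast
    have "convergent (\<lambda>k. Y (\<tau> (\<sigma> k \<omega>) \<omega>) \<omega> \<bullet> c)" if \<omega>: "\<omega> \<in> space G" and c: "c \<in> B" for \<omega> c
    proof -
      obtain l where "(\<lambda>k. Y (\<tau> k \<omega>) \<omega> \<bullet> c) \<longlonglongrightarrow> l"
        using conv \<omega> c by (auto simp: convergent_def)
      from random_subseq_LIMSEQ[OF \<sigma> \<omega> this] show ?thesis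
        by (auto simp: convergent_def)
    qed
    with conv_b show ?case
      by (intro exI[of _ "\<lambda>k \<omega>. \<tau> (\<sigma> k \<omega>) \<omega>"] conjI random_subseq_comp[OF \<tau> \<sigma>]) auto
  qed
  obtain \<tau> where \<tau>: "random_subseq G \<tau>"
    and conv: "\<forall>\<omega>\<in>space G. \<forall>b\<in>Basis. convergent (\<lambda>k. Y (\<tau> k \<omega>) \<omega> \<bullet> b)"
    using componentwise[OF finite_Basis] by blast
  have "convergent (\<lambda>k. Y (\<tau> k \<omega>) \<omega>)" if "\<omega> \<in> space G" for \<omega>
    by (rule convergent_componentwiseI) (use conv that in blast)
  with \<tau> show ?thesis
    by blast
qed

lemma random_subseq_convergent:
  fixes X :: "nat \<Rightarrow> 'w \<Rightarrow> 'a::euclidean_space"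
  assumes meas[measurable]: "\<And>n. X n \<in> borel_measurable G"
    and frequently_bounded: "\<And>\<omega>. \<omega> \<in> space G \<Longrightarrow> \<exists>B. \<exists>\<^sub>F n in sequentially. norm (X n \<omega>) \<le> B"
  shows "\<exists>\<tau>. random_subseq G \<tau> \<and> (\<forall>\<omega>\<in>space G. convergent (\<lambda>k. X (\<tau> k \<omega>) \<omega>))"
proof -
  define B where "B \<omega> = (LEAST m::nat. \<forall>N. \<exists>n\<ge>N. norm (X n \<omega>) \<le> real m)" for \<omega>
  have [measurable]: "B \<in> G \<rightarrow>\<^sub>M count_space UNIV"
    unfolding B_def by measurable
  have B: "\<forall>N. \<exists>n\<ge>N. norm (X n \<omega>) \<le> real (B \<omega>)" if \<omega>: "\<omega> \<in> space G" for \<omega>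
  proof -
    obtain b where b: "\<exists>\<^sub>F n in sequentially. norm (X n \<omega>) \<le> b"
      using frequently_bounded[OF \<omega>] by blast
    obtain m :: nat where "b \<le> real m"
      using real_arch_simple by blast
    from b have "\<exists>\<^sub>F n in sequentially. norm (X n \<omega>) \<le> real m"
      by (rule frequently_elim1) (use \<open>b \<le> real m\<close> in linarith)
    then have "\<forall>N. \<exists>n\<ge>N. norm (X n \<omega>) \<le> real m"
      by (simp add: frequently_sequentially)
    then show ?thesis
      unfolding B_def by (rule LeastI)
  qed
  define P where "P (k::nat) n \<omega> \<longleftrightarrow> norm (X n \<omega>) \<le> real (B \<omega>)" for k n \<omega>
  have P_meas: "Measurable.pred G (P k n)" for k n
    unfolding P_def by measurable
  have P_freq: "\<exists>n\<ge>N. P k n \<omega>" if "\<omega> \<in> space G" for \<omega> k N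
    using B[OF that] by (simp add: P_def)
  have selected: "random_subseq G (select_index P)"
    "\<And>\<omega> k. \<omega> \<in> space G \<Longrightarrow> P k (select_index P k \<omega>) \<omega>"
    using random_subseq_select_index[where G = G and P = P] P_meas P_freq by blast+
  have sub_meas: "(\<lambda>\<omega>. X (select_index P k \<omega>) \<omega>) \<in> borel_measurable G" for k
    by (rule measurable_random_subseq[OF selected(1) meas])
  have sub_bounded: "bounded (range (\<lambda>k. X (select_index P k \<omega>) \<omega>))" if "\<omega> \<in> space G" for \<omega>
    using selected(2)[OF that] unfolding bounded_iff P_def by blast
  obtain \<sigma> where \<sigma>: "random_subseq G \<sigma>"
    and conv: "\<forall>\<omega>\<in>space G. convergent (\<lambda>k. X (select_index P (\<sigma> k \<omega>) \<omega>) \<omega>)"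
    using random_subseq_convergent_bounded[where Y = "\<lambda>k \<omega>. X (select_index P k \<omega>) \<omega>",
      OF sub_meas sub_bounded] by blast
  show ?thesis
    using random_subseq_comp[OF selected(1) \<sigma>] conv by blast
qed

lemma filterlim_at_infinity_sequentially_iff:
  fixes X :: "nat \<Rightarrow> 'a::real_normed_vector"
  shows "filterlim X at_infinity sequentially \<longleftrightarrow> (\<forall>B::nat. \<exists>N. \<forall>n\<ge>N. real B \<le> norm (X n))"
  unfolding filterlim_at_infinity_conv_norm_at_top filterlim_at_top eventually_sequentially
  by (meson order.trans real_arch_simple)

lemma pred_filterlim_at_infinity:
  fixes x :: "nat \<Rightarrow> 'w \<Rightarrow> 'a::real_normed_vector"
  assumes [measurable]: "\<And>n. x n \<in> borel_measurable G"
  shows "Measurable.pred G (\<lambda>\<omega>. filterlim (\<lambda>n. x n \<omega>) at_infinity sequentially)"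
  unfolding filterlim_at_infinity_sequentially_iff by measurable

lemma frequently_bounded_if_not_at_infinity:
  fixes x :: "nat \<Rightarrow> 'a::real_normed_vector"
  assumes "\<not> filterlim x at_infinity sequentially"
  shows "\<exists>B. \<exists>\<^sub>F n in sequentially. norm (x n) \<le> B"
proof -
  from assms obtain B where "\<exists>\<^sub>F n in sequentially. \<not> B \<le> norm (x n)"
    by (auto simp: filterlim_at_infinity_conv_norm_at_top filterlim_at_top not_eventually)
  then have "\<exists>\<^sub>F n in sequentially. norm (x n) \<le> B"
    by (rule frequently_elim1) simp
  then show ?thesis
    by blast
qed

lemma norm_normalized_LIMSEQ:
  fixes x :: "nat \<Rightarrow> 'a::real_normed_vector"
  assumes "filterlim x at_infinity sequentially" and "(\<lambda>k. (1 / norm (x k)) *\<^sub>R x k) \<longlonglongrightarrow> u"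
  shows "norm u = 1"
proof -
  have "\<forall>\<^sub>F k in sequentially. norm ((1 / norm (x k)) *\<^sub>R x k) = 1"
    using filterlim_at_infinity_imp_eventually_ne[OF assms(1)] by (rule eventually_mono) simp
  then have "(\<lambda>k. norm ((1 / norm (x k)) *\<^sub>R x k)) \<longlonglongrightarrow> 1"
    by (rule tendsto_eventually)
  moreover have "(\<lambda>k. norm ((1 / norm (x k)) *\<^sub>R x k)) \<longlonglongrightarrow> norm u"
    by (rule tendsto_norm[OF assms(2)])
  ultimately show ?thesis
    by (rule LIMSEQ_unique[rotated])
qed

text \<open>Normalising the divergent part first makes the whole sequence frequently bounded, so the
  random Bolzano--Weierstrass lemma applies.\<close>
lemma random_subseq_normalized:
  fixes x :: "nat \<Rightarrow> 'w \<Rightarrow> 'a::euclidean_space"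
  assumes meas[measurable]: "\<And>n. x n \<in> borel_measurable G"
    and A: "closed A" "cone A" "0 \<in> A" and xA: "\<And>n \<omega>. \<omega> \<in> space G \<Longrightarrow> x n \<omega> \<in> A"
    and U_def: "\<And>\<omega>. U \<omega> \<longleftrightarrow> filterlim (\<lambda>n. x n \<omega>) at_infinity sequentially"
  shows "\<exists>\<tau> u. random_subseq G \<tau> \<and> u \<in> borel_measurable G \<and> (\<forall>\<omega>\<in>space G. u \<omega> \<in> A) \<and>
    (\<forall>\<omega>\<in>space G. \<not> U \<omega> \<longrightarrow> convergent (\<lambda>k. x (\<tau> k \<omega>) \<omega>) \<and> u \<omega> = 0) \<and>
    (\<forall>\<omega>\<in>space G. U \<omega> \<longrightarrow> (\<lambda>k. 1 / norm (x (\<tau> k \<omega>) \<omega>)) \<longlonglongrightarrow> 0) \<and>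
    (\<forall>\<omega>\<in>space G. U \<omega> \<longrightarrow> (\<lambda>k. (1 / norm (x (\<tau> k \<omega>) \<omega>)) *\<^sub>R x (\<tau> k \<omega>) \<omega>) \<longlonglongrightarrow> u \<omega>) \<and>
    (\<forall>\<omega>\<in>space G. U \<omega> \<longrightarrow> norm (u \<omega>) = 1)"
proof -
  have "U = (\<lambda>\<omega>. filterlim (\<lambda>n. x n \<omega>) at_infinity sequentially)"
    by (simp add: fun_eq_iff U_def)
  then have [measurable]: "Measurable.pred G U"
    using pred_filterlim_at_infinity[OF meas] by simp
  define Y where "Y n \<omega> = (if U \<omega> then (1 / norm (x n \<omega>)) *\<^sub>R x n \<omega> else x n \<omega>)" for n \<omega>
  have Y_meas [measurable]: "Y n \<in> borel_measurable G" for n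
    unfolding Y_def by measurable
  have "\<exists>B. \<exists>\<^sub>F n in sequentially. norm (Y n \<omega>) \<le> B" for \<omega>
  proof (cases "U \<omega>")
    case True
    then have "norm (Y n \<omega>) \<le> 1" for n
      by (cases "x n \<omega> = 0") (simp_all add: Y_def)
    then show ?thesis
      by (auto simp: frequently_sequentially)
  next
    case False
    then show ?thesis
      using frequently_bounded_if_not_at_infinity[of "\<lambda>n. x n \<omega>"] by (simp add: U_def Y_def)
  qed
  then obtain \<tau> where \<tau>: "random_subseq G \<tau>" and conv: "\<forall>\<omega>\<in>space G. convergent (\<lambda>k. Y (\<tau> k \<omega>) \<omega>)"
    using random_subseq_convergent[where X = Y, OF Y_meas] by blast
  define u where "u \<omega> = (if U \<omega> then lim (\<lambda>k. Y (\<tau> k \<omega>) \<omega>) else 0)" for \<omega>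
  have "(\<lambda>\<omega>. Y (\<tau> k \<omega>) \<omega>) \<in> borel_measurable G" for k
    by (rule measurable_random_subseq[OF \<tau> Y_meas])
  then have [measurable]: "(\<lambda>\<omega>. lim (\<lambda>k. Y (\<tau> k \<omega>) \<omega>)) \<in> borel_measurable G"
    by (rule borel_measurable_lim_metric)
  have "u \<in> borel_measurable G"
    unfolding u_def by measurable
  moreover have unbounded: "filterlim (\<lambda>k. x (\<tau> k \<omega>) \<omega>) at_infinity sequentially"
    if "\<omega> \<in> space G" "U \<omega>" for \<omega>
    using filterlim_compose[OF that(2)[unfolded U_def] filterlim_subseq] \<tau> that(1)
    by (simp add: random_subseq_def o_def)
  moreover have normalized: "(\<lambda>k. (1 / norm (x (\<tau> k \<omega>) \<omega>)) *\<^sub>R x (\<tau> k \<omega>) \<omega>) \<longlonglongrightarrow> u \<omega>"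
    if "\<omega> \<in> space G" "U \<omega>" for \<omega>
    using conv that by (auto simp: u_def Y_def convergent_LIMSEQ_iff)
  moreover have "u \<omega> \<in> A" if \<omega>: "\<omega> \<in> space G" for \<omega>
  proof (cases "U \<omega>")
    case True
    have "(1 / norm (x (\<tau> k \<omega>) \<omega>)) *\<^sub>R x (\<tau> k \<omega>) \<omega> \<in> A" for k
      using A(2) xA[OF \<omega>] by (simp add: cone_def)
    then show ?thesis
      using closed_sequentially[OF A(1) _ normalized[OF \<omega> True]] by blast
  qed (simp add: u_def A(3))
  moreover have "convergent (\<lambda>k. x (\<tau> k \<omega>) \<omega>) \<and> u \<omega> = 0" if "\<omega> \<in> space G" "\<not> U \<omega>" for \<omega>
    using conv that by (auto simp: u_def Y_def)
  moreover have "(\<lambda>k. 1 / norm (x (\<tau> k \<omega>) \<omega>)) \<longlonglongrightarrow> 0" if "\<omega> \<in> space G" "U \<omega>" for \<omega>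
    using tendsto_inverse_0_at_top[OF filterlim_at_infinity_imp_norm_at_top[OF unbounded[OF that]]]
    by (simp add: inverse_eq_divide)
  moreover have "norm (u \<omega>) = 1" if "\<omega> \<in> space G" "U \<omega>" for \<omega>
    by (rule norm_normalized_LIMSEQ[OF unbounded[OF that] normalized[OF that]])
  ultimately show ?thesis
    using \<tau> by blast
qed

lemma LIMSEQ_scaleR_in_span:
  fixes x :: "nat \<Rightarrow> 'a::euclidean_space"
  assumes "(\<lambda>k. c k *\<^sub>R x k) \<longlonglongrightarrow> u"
  shows "u \<in> span (range x)"
  by (rule closed_sequentially[OF closed_span _ assms]) (simp add: span_base span_mul)

lemma dim_range_orthogonal_less:
  fixes x :: "nat \<Rightarrow> 'a::euclidean_space"
  assumes u: "u \<in> span (range x)" "norm u = 1"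
  shows "dim (range (\<lambda>k. x k - (x k \<bullet> u) *\<^sub>R u)) < dim (range x)"
proof (rule dim_psubset)
  let ?R = "range (\<lambda>k. x k - (x k \<bullet> u) *\<^sub>R u)"
  have uu: "u \<bullet> u = 1"
    using u(2) by (simp add: power2_norm_eq_inner[symmetric])
  have "x k \<in> span (range x)" for k
    by (simp add: span_base)
  then have "?R \<subseteq> span (range x)"
    using u(1) by (auto intro!: span_diff span_mul)
  then have "span ?R \<subseteq> span (range x)"
    by (rule span_minimal[OF _ subspace_span])
  moreover have "span ?R \<subseteq> {y. y \<bullet> u = 0}"
    by (rule span_minimal[OF _ subspace_hyperplane2]) (auto simp: inner_diff_left uu)
  then have "u \<notin> span ?R"
    using uu by auto
  ultimately show "span ?R \<subset> span (range x)"
    using u(1) by blast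
qed


section \<open>Measurability\<close>

lemma (in complete_measure) borel_measurable_AE_eq:
  fixes g h :: "'a \<Rightarrow> 'b::topological_space"
  assumes "h \<in> borel_measurable M" and "AE x in M. g x = h x"
  shows "g \<in> borel_measurable M"
proof (rule measurableI)
  show "g x \<in> space borel" for x
    by simp
  fix S :: "'b set" assume "S \<in> sets borel"
  then have "h -` S \<inter> space M \<in> sets M"
    using assms(1) by (rule measurable_sets[rotated])
  then show "g -` S \<inter> space M \<in> sets M"
    by (rule in_sets_AE[rotated]) (use assms(2) in auto)
qed

lemma (in complete_measure) borel_measurable_AE_LIMSEQ:
  fixes f :: "nat \<Rightarrow> 'a \<Rightarrow> 'b::{banach, second_countable_topology}"
  assumes "\<And>n. f n \<in> borel_measurable M" and "AE x in M. (\<lambda>n. f n x) \<longlonglongrightarrow> g x"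
  shows "g \<in> borel_measurable M"
proof (rule borel_measurable_AE_eq)
  show "(\<lambda>x. lim (\<lambda>n. f n x)) \<in> borel_measurable M"
    using assms(1) by measurable
  show "AE x in M. g x = lim (\<lambda>n. f n x)"
    using assms(2) by eventually_elim (simp add: limI)
qed

lemma measurable_countable_approx:
  fixes \<eta> :: "'a \<Rightarrow> 'b::{metric_space, second_countable_topology}"
  assumes [measurable]: "\<eta> \<in> borel_measurable M"
  shows "\<exists>(e :: nat \<Rightarrow> 'b) (N :: nat \<Rightarrow> 'a \<Rightarrow> nat).
    (\<forall>k. N k \<in> M \<rightarrow>\<^sub>M count_space UNIV) \<and> (\<forall>\<omega>. (\<lambda>k. e (N k \<omega>)) \<longlonglongrightarrow> \<eta> \<omega>)"
proof -
  obtain D :: "'b set" where D: "countable D" "\<And>U. open U \<Longrightarrow> U \<noteq> {} \<Longrightarrow> \<exists>y\<in>D. y \<in> U"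
    using countable_dense_exists by blast
  define e where "e = from_nat_into D"
  have close: "\<exists>n. dist (e n) y < r" if "r > 0" for y r
  proof -
    have "\<exists>z\<in>D. z \<in> ball y r"
      using D(2)[of "ball y r"] that by simp
    then obtain z where "z \<in> D" "z \<in> ball y r"
      by blast
    moreover obtain n where "e n = z"
      using from_nat_into_surj[OF D(1) \<open>z \<in> D\<close>] e_def by blast
    ultimately show ?thesis
      by (auto simp: dist_commute)
  qed
  define N where "N k \<omega> = (LEAST n. dist (e n) (\<eta> \<omega>) < 1 / real (Suc k))" for k \<omega>
  have "N k \<in> M \<rightarrow>\<^sub>M count_space UNIV" for k
    unfolding N_def by measurable
  moreover have "(\<lambda>k. e (N k \<omega>)) \<longlonglongrightarrow> \<eta> \<omega>" for \<omega>
  proof (rule LIMSEQ_dist_less_inverse_Suc)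
    fix k
    have "\<exists>n. dist (e n) (\<eta> \<omega>) < 1 / real (Suc k)"
      by (rule close) simp
    then show "dist (e (N k \<omega>)) (\<eta> \<omega>) < 1 / real (Suc k)"
      unfolding N_def by (rule LeastI_ex)
  qed
  ultimately show ?thesis
    by blast
qed

text \<open>Approximate the argument by countably-valued measurable maps; completeness absorbs the
  null set where continuity fails.\<close>
lemma (in complete_measure) borel_measurable_continuous_apply:
  fixes f :: "'a \<Rightarrow> 'b::{metric_space, second_countable_topology}
    \<Rightarrow> 'c::{banach, second_countable_topology}"
  assumes "\<And>y. (\<lambda>\<omega>. f \<omega> y) \<in> borel_measurable M"
    and "AE \<omega> in M. continuous_on UNIV (f \<omega>)" and \<eta>: "\<eta> \<in> borel_measurable M"
  shows "(\<lambda>\<omega>. f \<omega> (\<eta> \<omega>)) \<in> borel_measurable M"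
proof -
  obtain e and N :: "nat \<Rightarrow> 'a \<Rightarrow> nat" where N: "\<forall>k. N k \<in> M \<rightarrow>\<^sub>M count_space UNIV"
    and approx: "\<forall>\<omega>. (\<lambda>k. e (N k \<omega>)) \<longlonglongrightarrow> \<eta> \<omega>"
    using measurable_countable_approx[OF \<eta>] by blast
  have "(\<lambda>\<omega>. f \<omega> (e (N k \<omega>))) \<in> borel_measurable M" for k
    by (rule measurable_compose_countable[where f = "\<lambda>i \<omega>. f \<omega> (e i)"]) (use assms(1) N in auto)
  moreover have "AE \<omega> in M. (\<lambda>k. f \<omega> (e (N k \<omega>))) \<longlonglongrightarrow> f \<omega> (\<eta> \<omega>)"
    using assms(2)
  proof eventually_elim
    case (elim \<omega>)
    show ?case
      by (rule continuous_on_tendsto_compose[OF elim approx[rule_format]]) simp_all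
  qed
  ultimately show ?thesis
    by (rule borel_measurable_AE_LIMSEQ)
qed

lemma conv_in_prob_AE_subseq:
  fixes g :: "nat \<Rightarrow> 'w \<Rightarrow> ('d::finite) vect"
  assumes "prob_space M" and [measurable]: "\<And>n. g n \<in> borel_measurable M" "g0 \<in> borel_measurable M"
    and conv: "conv_in_prob M g g0"
  obtains \<sigma> where "strict_mono \<sigma>" and "AE \<omega> in M. (\<lambda>k. g (\<sigma> k) \<omega>) \<longlonglongrightarrow> g0 \<omega>"
proof -
  interpret prob_space M by fact
  define D where "D n \<epsilon> = {\<omega>\<in>space M. dist (g n \<omega>) (g0 \<omega>) > \<epsilon>}" for n \<epsilon>
  have "\<forall>k. \<exists>N. \<forall>n\<ge>N. measure M (D n ((1/2)^k)) < (1/2)^k"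
  proof
    fix k :: nat
    have "(\<lambda>n. measure M (D n ((1/2)^k))) \<longlonglongrightarrow> 0"
      using conv unfolding conv_in_prob_def D_def by simp
    from order_tendstoD(2)[OF this, of "(1/2)^k"]
      show "\<exists>N. \<forall>n\<ge>N. measure M (D n ((1/2)^k)) < (1/2)^k"
      by (simp add: eventually_sequentially)
  qed
  from choice[OF this] obtain N where N: "\<And>k n. n \<ge> N k \<Longrightarrow> measure M (D n ((1/2)^k)) < (1/2)^k"
    by blast
  define \<sigma> where "\<sigma> k = k + (\<Sum>j\<le>k. N j)" for k
  have "strict_mono \<sigma>"
    by (rule strict_monoI_Suc) (simp add: \<sigma>_def)
  have "N k \<le> \<sigma> k" for k
    using member_le_sum[of k "{..k}" N] by (simp add: \<sigma>_def)
  then have small: "measure M (D (\<sigma> k) ((1/2)^k)) \<le> (1/2)^k" for k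
    using N less_imp_le by blast
  have [measurable]: "D n \<epsilon> \<in> sets M" for n \<epsilon>
    unfolding D_def by measurable
  have "summable (\<lambda>k. measure M (D (\<sigma> k) ((1/2)^k)))"
    by (rule summable_comparison_test[OF _ summable_geometric[of "1/2::real"]]) (use small in auto)
  then have "AE \<omega> in M. \<forall>\<^sub>F k in sequentially. \<omega> \<in> space M - D (\<sigma> k) ((1/2)^k)"
    by (intro borel_cantelli_AE1) (simp_all add: less_top[symmetric])
  then have "AE \<omega> in M. (\<lambda>k. g (\<sigma> k) \<omega>) \<longlonglongrightarrow> g0 \<omega>"
  proof (rule AE_mp, intro AE_I2 impI)
    fix \<omega> assume "\<forall>\<^sub>F k in sequentially. \<omega> \<in> space M - D (\<sigma> k) ((1/2)^k)"
    then have "\<forall>\<^sub>F k in sequentially. norm (dist (g (\<sigma> k) \<omega>) (g0 \<omega>)) \<le> (1/2)^k"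
      by (rule eventually_mono) (auto simp: D_def)
    then have "(\<lambda>k. dist (g (\<sigma> k) \<omega>) (g0 \<omega>)) \<longlonglongrightarrow> 0"
      by (rule Lim_null_comparison) (rule LIMSEQ_realpow_zero; simp)
    then show "(\<lambda>k. g (\<sigma> k) \<omega>) \<longlonglongrightarrow> g0 \<omega>"
      by (rule tendsto_dist_iff[THEN iffD2])
  qed
  with \<open>strict_mono \<sigma>\<close> show ?thesis
    by (rule that)
qed

section \<open>Maps of class F\<close>

lemma classF_scaleR: "f \<in> classF A \<Longrightarrow> 0 \<le> c \<Longrightarrow> f (c *\<^sub>R a) = c *\<^sub>R f a"
  unfolding classF_def by blast

lemma classF_zero: "f \<in> classF A \<Longrightarrow> f 0 = 0"
  using classF_scaleR[of f A 0 0] by simp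

lemma classF_tendsto: "f \<in> classF A \<Longrightarrow> X \<longlonglongrightarrow> l \<Longrightarrow> (\<lambda>n. f (X n)) \<longlonglongrightarrow> f l"
  unfolding classF_def using continuous_on_tendsto_compose by fastforce

lemma classF_superadditive:
  assumes "f \<in> classF A" "0 \<le> c" "0 \<le> b" "a \<in> A" "a' \<in> A"
  shows "c *\<^sub>R f a + b *\<^sub>R f a' \<le> f (c *\<^sub>R a + b *\<^sub>R a')"
  using assms unfolding classF_def nonneg_vec_def by (auto simp: less_eq_vec_def)

text \<open>Superadditivity applied to \<open>x\<close> and \<open>|c| y\<close> or \<open>|c| (-y)\<close>; oddness on \<open>y\<close> covers both
  signs of \<open>c\<close>.\<close>
lemma classF_diff_scaleR:
  assumes f: "f \<in> classF A" and x: "x \<in> A" and y: "y \<in> A" "- y \<in> A" and odd: "f (- y) = - f y"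
  shows "f x - c *\<^sub>R f y \<le> f (x - c *\<^sub>R y)"
proof (cases "0 \<le> c")
  case True
  have "1 *\<^sub>R f x + c *\<^sub>R f (- y) \<le> f (1 *\<^sub>R x + c *\<^sub>R (- y))"
    by (rule classF_superadditive[OF f _ True x y(2)]) simp
  then show ?thesis
    using odd by simp
next
  case False
  have "1 *\<^sub>R f x + (- c) *\<^sub>R f y \<le> f (1 *\<^sub>R x + (- c) *\<^sub>R y)"
    by (rule classF_superadditive[OF f _ _ x y(1)]) (use False in simp_all)
  then show ?thesis
    by simp
qed

section \<open>Dominated pay-offs\<close>

lemma nonempty_if_inAT:
  assumes "prob_space M" and "inAT M H A F T g"
  shows "A \<noteq> {}"
proof -
  obtain \<eta> where "\<eta> \<in> L0A M H A 0"
    using assms(2) unfolding inAT_def inNproc_def inN_def by blast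
  moreover obtain \<omega> where "\<omega> \<in> space M"
    using prob_space.not_empty[OF assms(1)] by blast
  ultimately show ?thesis
    unfolding L0A_def by blast
qed

locale closedness_setting =
  fixes M :: "'w measure" and H :: "nat \<Rightarrow> 'w measure" and T :: nat
    and A :: "('d::finite) mat set" and F :: "nat \<Rightarrow> 'w \<Rightarrow> 'd mat \<Rightarrow> 'd vect"
  assumes complete: "complete_measure M"
    and subalgebra_H: "\<forall>t\<le>T. subalgebra M (H t)"
    and filtration_H: "\<forall>s t. s \<le> t \<longrightarrow> t \<le> T \<longrightarrow> sets (H s) \<subseteq> sets (H t)"
    and closed_A: "closed A" and convex_cone_A: "convex_cone A"
    and random_F: "randomF M A F" and KP: "KP M H A F T" and HN0: "HN0 M H A F T"
begin

lemma zero_in_A: "0 \<in> A"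
  using convex_cone_A by (rule convex_cone_contains_0)

lemma cone_A: "cone A"
  using convex_cone_A by (simp add: convex_cone_iff cone_def)

lemma scaleR_in_A: "x \<in> A \<Longrightarrow> 0 \<le> c \<Longrightarrow> c *\<^sub>R x \<in> A"
  using convex_cone_A by (simp add: convex_cone_scaleR)

lemma diff_scaleR_in_A:
  assumes "x \<in> A" and "y \<in> A" and "- y \<in> A"
  shows "x - c *\<^sub>R y \<in> A"
proof (cases "0 \<le> c")
  case True
  have "x + c *\<^sub>R (- y) \<in> A"
    by (rule convex_cone_add[OF convex_cone_A assms(1) scaleR_in_A[OF assms(3) True]])
  then show ?thesis
    by simp
next
  case False
  have "x + (- c) *\<^sub>R y \<in> A"
    by (rule convex_cone_add[OF convex_cone_A assms(1) scaleR_in_A[OF assms(2)]])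
      (use False in simp)
  then show ?thesis
    by simp
qed

lemma sets_borel_A [measurable]: "A \<in> sets borel"
  using closed_A by (rule borel_closed)

lemma space_H: "t \<le> T \<Longrightarrow> space (H t) = space M"
  using subalgebra_H by (simp add: subalgebra_def)

lemma measurable_H_imp_M: "t \<le> T \<Longrightarrow> f \<in> H t \<rightarrow>\<^sub>M N \<Longrightarrow> f \<in> M \<rightarrow>\<^sub>M N"
  using subalgebra_H measurable_from_subalg by blast

lemma measurable_H_mono:
  assumes "s \<le> t" and "t \<le> T" and "f \<in> H s \<rightarrow>\<^sub>M N"
  shows "f \<in> H t \<rightarrow>\<^sub>M N"
proof (rule measurable_from_subalg[OF _ assms(3)])
  show "subalgebra (H t) (H s)"
    using assms(1,2) filtration_H space_H[of s] space_H[of t] by (simp add: subalgebra_def)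
qed

lemma AE_classF: "AE \<omega> in M. \<forall>t. F t \<omega> \<in> classF A"
  using random_F by (simp add: randomF_def AE_all_countable)

lemma borel_measurable_F_apply:
  assumes "\<eta> \<in> borel_measurable M"
  shows "(\<lambda>\<omega>. F t \<omega> (\<eta> \<omega>)) \<in> borel_measurable M"
proof (rule complete_measure.borel_measurable_continuous_apply[OF complete _ _ assms])
  show "(\<lambda>\<omega>. F t \<omega> a) \<in> borel_measurable M" for a
    using random_F by (simp add: randomF_def)
  show "AE \<omega> in M. continuous_on UNIV (F t \<omega>)"
    using AE_classF by eventually_elim (simp add: classF_def)
qed

lemma inN_F: "\<eta> \<in> L0A M H A t \<Longrightarrow> inN M H A F t (\<lambda>\<omega>. F t \<omega> (\<eta> \<omega>))"
  unfolding inN_def by blast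

lemma inN_zero: "inN M H A F t (\<lambda>\<omega>. 0)"
  unfolding inN_def
proof
  show "(\<lambda>\<omega>. 0) \<in> L0A M H A t"
    by (simp add: L0A_def zero_in_A)
  show "AE \<omega> in M. 0 = F t \<omega> 0"
    using AE_classF by eventually_elim (metis classF_zero)
qed

definition tail_sum :: "nat \<Rightarrow> (nat \<Rightarrow> 'w \<Rightarrow> 'd mat) \<Rightarrow> 'w \<Rightarrow> 'd vect" where
  "tail_sum s \<eta> \<omega> = (\<Sum>t\<in>{s..T}. F t \<omega> (\<eta> t \<omega>))"

definition admissible :: "nat \<Rightarrow> (nat \<Rightarrow> 'w \<Rightarrow> 'd mat) \<Rightarrow> bool" where
  "admissible s \<eta> \<longleftrightarrow> (\<forall>t\<in>{s..T}. \<eta> t \<in> L0A M H A t)"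

definition dominated :: "nat \<Rightarrow> ('w \<Rightarrow> 'd vect) \<Rightarrow> bool" where
  "dominated s g \<longleftrightarrow> (\<exists>\<eta>. admissible s \<eta> \<and> (AE \<omega> in M. g \<omega> \<le> tail_sum s \<eta> \<omega>))"

definition dominated_limit ::
    "nat \<Rightarrow> (nat \<Rightarrow> nat \<Rightarrow> 'w \<Rightarrow> 'd mat) \<Rightarrow> (nat \<Rightarrow> 'w \<Rightarrow> 'd vect) \<Rightarrow> ('w \<Rightarrow> 'd vect) \<Rightarrow> bool" where
  "dominated_limit s \<eta> h g \<longleftrightarrow> (\<forall>n. admissible s (\<eta> n)) \<and>
     (AE \<omega> in M. \<forall>n. h n \<omega> \<le> tail_sum s (\<eta> n) \<omega>) \<and> (AE \<omega> in M. (\<lambda>n. h n \<omega>) \<longlonglongrightarrow> g \<omega>)"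

definition closed_dominated :: "nat \<Rightarrow> bool" where
  "closed_dominated s \<longleftrightarrow> (\<forall>\<eta> h g. dominated_limit s \<eta> h g \<longrightarrow> dominated s g)"

lemma tail_sum_Suc: "s \<le> T \<Longrightarrow> tail_sum s \<eta> \<omega> = F s \<omega> (\<eta> s \<omega>) + tail_sum (Suc s) \<eta> \<omega>"
  unfolding tail_sum_def by (simp add: Icc_eq_insert_lb_nat)

lemma tail_sum_cong:
  assumes "\<And>t. t \<in> {s..T} \<Longrightarrow> \<eta> t \<omega> = \<eta>' t \<omega>"
  shows "tail_sum s \<eta> \<omega> = tail_sum s \<eta>' \<omega>"
  unfolding tail_sum_def using assms by (intro sum.cong) simp_all

lemma tail_sum_fun_upd: "s \<le> T \<Longrightarrow> tail_sum s (\<eta>(s := u)) \<omega> = F s \<omega> (u \<omega>) + tail_sum (Suc s) \<eta> \<omega>"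
  using tail_sum_cong[of "Suc s" "\<eta>(s := u)" \<omega> \<eta>] by (simp add: tail_sum_Suc)

lemma tail_sum_scaleR:
  assumes "\<forall>t. F t \<omega> \<in> classF A" and "0 \<le> c \<omega>"
  shows "tail_sum s (\<lambda>t \<omega>. c \<omega> *\<^sub>R \<eta> t \<omega>) \<omega> = c \<omega> *\<^sub>R tail_sum s \<eta> \<omega>"
  unfolding tail_sum_def scaleR_sum_right using assms by (auto intro!: sum.cong classF_scaleR)

lemma admissible_Suc: "admissible s \<eta> \<Longrightarrow> admissible (Suc s) \<eta>"
  unfolding admissible_def by simp

lemma admissible_fun_upd:
  assumes "u \<in> L0A M H A s" and "admissible (Suc s) \<eta>"
  shows "admissible s (\<eta>(s := u))"
  unfolding admissible_def
proof
  fix t assume "t \<in> {s..T}"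
  then consider "t = s" | "t \<in> {Suc s..T}"
    by fastforce
  then show "(\<eta>(s := u)) t \<in> L0A M H A t"
    using assms unfolding admissible_def by cases auto
qed

lemma admissible_scaleR:
  assumes \<eta>: "admissible s \<eta>" and \<alpha>: "\<alpha> \<in> borel_measurable (H s)" and \<alpha>_nonneg: "\<And>\<omega>. 0 \<le> \<alpha> \<omega>"
  shows "admissible s (\<lambda>t \<omega>. \<alpha> \<omega> *\<^sub>R \<eta> t \<omega>)"
  unfolding admissible_def
proof
  fix t assume t: "t \<in> {s..T}"
  have [measurable]: "\<eta> t \<in> borel_measurable (H t)"
    using \<eta> t by (simp add: admissible_def L0A_def)
  have [measurable]: "\<alpha> \<in> borel_measurable (H t)"
    using t by (intro measurable_H_mono[OF _ _ \<alpha>]) auto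
  have "\<alpha> \<omega> *\<^sub>R \<eta> t \<omega> \<in> A" if "\<omega> \<in> space M" for \<omega>
    using \<eta> t that \<alpha>_nonneg scaleR_in_A by (simp add: admissible_def L0A_def)
  then show "(\<lambda>\<omega>. \<alpha> \<omega> *\<^sub>R \<eta> t \<omega>) \<in> L0A M H A t"
    unfolding L0A_def by simp measurable
qed

lemma dominatedI: "admissible s \<eta> \<Longrightarrow> AE \<omega> in M. g \<omega> \<le> tail_sum s \<eta> \<omega> \<Longrightarrow> dominated s g"
  unfolding dominated_def by blast

lemma dominated_fun_upd:
  assumes s: "s \<le> T" and u: "u \<in> L0A M H A s" and dom: "dominated (Suc s) (\<lambda>\<omega>. g \<omega> - F s \<omega> (u \<omega>))"
  shows "dominated s g"
proof -
  obtain \<eta> where \<eta>: "admissible (Suc s) \<eta>"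
    and le: "AE \<omega> in M. g \<omega> - F s \<omega> (u \<omega>) \<le> tail_sum (Suc s) \<eta> \<omega>"
    using dom unfolding dominated_def by blast
  from le have "AE \<omega> in M. g \<omega> \<le> tail_sum s (\<eta>(s := u)) \<omega>"
    by eventually_elim (simp add: tail_sum_fun_upd[OF s] diff_le_eq add.commute)
  with admissible_fun_upd[OF u \<eta>] show ?thesis
    by (rule dominatedI)
qed

lemma closed_dominatedD:
  assumes "closed_dominated s" and "\<And>n. dominated s (h n)" and "AE \<omega> in M. (\<lambda>n. h n \<omega>) \<longlonglongrightarrow> g \<omega>"
  shows "dominated s g"
proof -
  have "\<forall>n. \<exists>\<eta>. admissible s \<eta> \<and> (AE \<omega> in M. h n \<omega> \<le> tail_sum s \<eta> \<omega>)"
    using assms(2) unfolding dominated_def by blast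
  from choice[OF this] obtain \<eta>
    where "\<forall>n. admissible s (\<eta> n) \<and> (AE \<omega> in M. h n \<omega> \<le> tail_sum s (\<eta> n) \<omega>)"
    by blast
  with assms(3) have "dominated_limit s \<eta> h g"
    by (simp add: dominated_limit_def AE_all_countable)
  with assms(1) show ?thesis
    unfolding closed_dominated_def by blast
qed

lemma closed_dominated_beyond: "closed_dominated (Suc T)"
  unfolding closed_dominated_def
proof (intro allI impI)
  fix \<eta> h g assume lim: "dominated_limit (Suc T) \<eta> h g"
  have "AE \<omega> in M. \<forall>n. h n \<omega> \<le> 0"
    using lim by (simp add: dominated_limit_def tail_sum_def)
  moreover have "AE \<omega> in M. (\<lambda>n. h n \<omega>) \<longlonglongrightarrow> g \<omega>"
    using lim by (simp add: dominated_limit_def)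
  ultimately have "AE \<omega> in M. g \<omega> \<le> tail_sum (Suc T) \<eta>' \<omega>" for \<eta>'
  proof eventually_elim
    case (elim \<omega>)
    have "g \<omega> \<in> {..0}"
      by (rule closed_sequentially[OF closed_eucl_atMost _ elim(2)]) (use elim(1) in simp)
    then show ?case
      by (simp add: tail_sum_def)
  qed
  then show "dominated (Suc T) g"
    by (intro dominatedI[of _ "\<lambda>t \<omega>. 0"]) (simp_all add: admissible_def)
qed

lemma dominated_limit_random_subseq:
  assumes s: "s \<le> T" and \<tau>: "random_subseq (H s) \<tau>" and lim: "dominated_limit s \<eta> h g"
  shows "dominated_limit s (\<lambda>k t \<omega>. \<eta> (\<tau> k \<omega>) t \<omega>) (\<lambda>k \<omega>. h (\<tau> k \<omega>) \<omega>) g"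
proof -
  have adm: "\<forall>n. admissible s (\<eta> n)"
    and le: "AE \<omega> in M. \<forall>n. h n \<omega> \<le> tail_sum s (\<eta> n) \<omega>"
    and conv: "AE \<omega> in M. (\<lambda>n. h n \<omega>) \<longlonglongrightarrow> g \<omega>"
    using lim by (simp_all add: dominated_limit_def)
  have "admissible s (\<lambda>t \<omega>. \<eta> (\<tau> k \<omega>) t \<omega>)" for k
    unfolding admissible_def
  proof
    fix t assume t: "t \<in> {s..T}"
    have "\<tau> k \<in> H t \<rightarrow>\<^sub>M count_space UNIV"
      using \<tau> t by (intro measurable_H_mono[of s t]) (auto simp: random_subseq_def)
    moreover have "\<eta> n t \<in> borel_measurable (H t)" for n
      using adm t by (simp add: admissible_def L0A_def)
    ultimately have "(\<lambda>\<omega>. \<eta> (\<tau> k \<omega>) t \<omega>) \<in> borel_measurable (H t)"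
      by (rule measurable_compose_countable[where f = "\<lambda>n. \<eta> n t", rotated])
    moreover have "\<eta> (\<tau> k \<omega>) t \<omega> \<in> A" if "\<omega> \<in> space M" for \<omega>
      using adm t that by (simp add: admissible_def L0A_def)
    ultimately show "(\<lambda>\<omega>. \<eta> (\<tau> k \<omega>) t \<omega>) \<in> L0A M H A t"
      by (simp add: L0A_def)
  qed
  moreover from le have "AE \<omega> in M. \<forall>k. h (\<tau> k \<omega>) \<omega> \<le> tail_sum s (\<lambda>t \<omega>. \<eta> (\<tau> k \<omega>) t \<omega>) \<omega>"
    by eventually_elim (simp add: tail_sum_def)
  moreover from conv AE_space have "AE \<omega> in M. (\<lambda>k. h (\<tau> k \<omega>) \<omega>) \<longlonglongrightarrow> g \<omega>"
  proof eventually_elim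
    case (elim \<omega>)
    then show ?case
      using random_subseq_LIMSEQ[OF \<tau>, of \<omega> "\<lambda>n. h n \<omega>"] space_H[OF s] by simp
  qed
  ultimately show ?thesis
    unfolding dominated_limit_def by blast
qed

section \<open>Closedness by backward induction\<close>

lemma dominated_of_convergent:
  assumes s: "s \<le> T" and C: "closed_dominated (Suc s)" and lim: "dominated_limit s \<eta> h g"
    and conv: "AE \<omega> in M. convergent (\<lambda>n. \<eta> n s \<omega>)"
  shows "dominated s g"
proof -
  have \<eta>_s: "\<eta> n s \<in> L0A M H A s" for n
    using lim s by (simp add: dominated_limit_def admissible_def)
  have [measurable]: "\<eta> n s \<in> borel_measurable (H s)" for n
    using \<eta>_s by (simp add: L0A_def)
  define u where "u \<omega> = (if lim (\<lambda>n. \<eta> n s \<omega>) \<in> A then lim (\<lambda>n. \<eta> n s \<omega>) else 0)" for \<omega>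
  have u: "u \<in> L0A M H A s"
    unfolding L0A_def u_def using zero_in_A by simp measurable
  have u_lim: "AE \<omega> in M. (\<lambda>n. \<eta> n s \<omega>) \<longlonglongrightarrow> u \<omega>"
    using conv AE_space
  proof eventually_elim
    case (elim \<omega>)
    then have "(\<lambda>n. \<eta> n s \<omega>) \<longlonglongrightarrow> lim (\<lambda>n. \<eta> n s \<omega>)"
      by (simp add: convergent_LIMSEQ_iff)
    moreover have "lim (\<lambda>n. \<eta> n s \<omega>) \<in> A"
      using closed_sequentially[OF closed_A _ calculation] \<eta>_s elim(2) by (simp add: L0A_def)
    ultimately show ?case
      by (simp add: u_def)
  qed
  define h' where "h' n \<omega> = h n \<omega> - F s \<omega> (\<eta> n s \<omega>)" for n \<omega>
  have "dominated_limit (Suc s) \<eta> h' (\<lambda>\<omega>. g \<omega> - F s \<omega> (u \<omega>))"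
    unfolding dominated_limit_def
  proof (intro conjI)
    show "\<forall>n. admissible (Suc s) (\<eta> n)"
      using lim by (simp add: dominated_limit_def admissible_Suc)
    have "AE \<omega> in M. \<forall>n. h n \<omega> \<le> tail_sum s (\<eta> n) \<omega>"
      using lim by (simp add: dominated_limit_def)
    then show "AE \<omega> in M. \<forall>n. h' n \<omega> \<le> tail_sum (Suc s) (\<eta> n) \<omega>"
      by eventually_elim (simp add: h'_def tail_sum_Suc[OF s] diff_le_eq add.commute)
    have "AE \<omega> in M. (\<lambda>n. h n \<omega>) \<longlonglongrightarrow> g \<omega>"
      using lim by (simp add: dominated_limit_def)
    then show "AE \<omega> in M. (\<lambda>n. h' n \<omega>) \<longlonglongrightarrow> g \<omega> - F s \<omega> (u \<omega>)"
      using u_lim AE_classF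
    proof eventually_elim
      case (elim \<omega>)
      show ?case
        unfolding h'_def
        by (rule tendsto_diff[OF elim(1) classF_tendsto[OF elim(3)[rule_format] elim(2)]])
    qed
  qed
  with C have "dominated (Suc s) (\<lambda>\<omega>. g \<omega> - F s \<omega> (u \<omega>))"
    unfolding closed_dominated_def by blast
  then show ?thesis
    by (rule dominated_fun_upd[OF s u])
qed

lemma dominated_rescaled_limit:
  assumes s: "s \<le> T" and C: "closed_dominated (Suc s)" and lim: "dominated_limit s \<eta> h g"
    and \<alpha>_meas: "\<And>k. \<alpha> k \<in> borel_measurable (H s)" and \<alpha>_nonneg: "\<And>k \<omega>. 0 \<le> \<alpha> k \<omega>"
    and \<alpha>_lim: "\<And>\<omega>. \<omega> \<in> space M \<Longrightarrow> (\<lambda>k. \<alpha> k \<omega>) \<longlonglongrightarrow> 0"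
    and scaled_lim: "\<And>\<omega>. \<omega> \<in> space M \<Longrightarrow> (\<lambda>k. \<alpha> k \<omega> *\<^sub>R \<eta> k s \<omega>) \<longlonglongrightarrow> u \<omega>"
  shows "dominated (Suc s) (\<lambda>\<omega>. - F s \<omega> (u \<omega>))"
proof -
  define \<eta>' where "\<eta>' = (\<lambda>k t \<omega>. \<alpha> k \<omega> *\<^sub>R \<eta> k t \<omega>)"
  define h' where "h' k \<omega> = \<alpha> k \<omega> *\<^sub>R h k \<omega> - F s \<omega> (\<alpha> k \<omega> *\<^sub>R \<eta> k s \<omega>)" for k \<omega>
  have adm: "\<forall>n. admissible s (\<eta> n)"
    and le: "AE \<omega> in M. \<forall>n. h n \<omega> \<le> tail_sum s (\<eta> n) \<omega>"
    and conv: "AE \<omega> in M. (\<lambda>n. h n \<omega>) \<longlonglongrightarrow> g \<omega>"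
    using lim by (simp_all add: dominated_limit_def)
  have "dominated_limit (Suc s) \<eta>' h' (\<lambda>\<omega>. - F s \<omega> (u \<omega>))"
    unfolding dominated_limit_def
  proof (intro conjI allI)
    show "admissible (Suc s) (\<eta>' k)" for k
      unfolding \<eta>'_def using adm admissible_scaleR[OF _ \<alpha>_meas \<alpha>_nonneg]
        by (simp add: admissible_Suc)
    from le AE_classF show "AE \<omega> in M. \<forall>k. h' k \<omega> \<le> tail_sum (Suc s) (\<eta>' k) \<omega>"
    proof eventually_elim
      case (elim \<omega>)
      show ?case
      proof
        fix k
        have "\<alpha> k \<omega> *\<^sub>R h k \<omega> \<le> \<alpha> k \<omega> *\<^sub>R tail_sum s (\<eta> k) \<omega>"
          using elim(1) \<alpha>_nonneg by (simp add: scaleR_left_mono)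
        also have "\<dots> = F s \<omega> (\<alpha> k \<omega> *\<^sub>R \<eta> k s \<omega>) + tail_sum (Suc s) (\<eta>' k) \<omega>"
          using classF_scaleR[OF elim(2)[rule_format] \<alpha>_nonneg, of s k \<omega> "\<eta> k s \<omega>"]
            tail_sum_scaleR[where c = "\<alpha> k", OF elim(2) \<alpha>_nonneg, of "Suc s" "\<eta> k"]
          by (simp add: tail_sum_Suc[OF s] \<eta>'_def scaleR_add_right)
        finally show "h' k \<omega> \<le> tail_sum (Suc s) (\<eta>' k) \<omega>"
          by (simp add: h'_def diff_le_eq add.commute)
      qed
    qed
    from conv AE_classF AE_space show "AE \<omega> in M. (\<lambda>k. h' k \<omega>) \<longlonglongrightarrow> - F s \<omega> (u \<omega>)"
    proof eventually_elim
      case (elim \<omega>)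
      have "(\<lambda>k. \<alpha> k \<omega> *\<^sub>R h k \<omega>) \<longlonglongrightarrow> 0 *\<^sub>R g \<omega>"
        by (rule tendsto_scaleR[OF \<alpha>_lim[OF elim(3)] elim(1)])
      moreover have "(\<lambda>k. F s \<omega> (\<alpha> k \<omega> *\<^sub>R \<eta> k s \<omega>)) \<longlonglongrightarrow> F s \<omega> (u \<omega>)"
        by (rule classF_tendsto[OF elim(2)[rule_format] scaled_lim[OF elim(3)]])
      ultimately show ?case
        unfolding h'_def using tendsto_diff by fastforce
    qed
  qed
  with C show ?thesis
    unfolding closed_dominated_def by blast
qed

lemma KP_tail_sum_nonneg:
  assumes \<zeta>: "admissible s \<zeta>" and nonneg: "AE \<omega> in M. 0 \<le> tail_sum s \<zeta> \<omega>"
  shows "AE \<omega> in M. tail_sum s \<zeta> \<omega> = 0"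
    and "\<And>t. t \<in> {s..T} \<Longrightarrow> AE \<omega> in M. F t \<omega> (- \<zeta> t \<omega>) = - F t \<omega> (\<zeta> t \<omega>)"
    and "\<And>t. t \<in> {s..T} \<Longrightarrow> AE \<omega> in M. - \<zeta> t \<omega> \<in> A"
proof -
  define \<xi> where "\<xi> = (\<lambda>t \<omega>. if s \<le> t then F t \<omega> (\<zeta> t \<omega>) else 0)"
  have \<xi>: "inNproc M H A F T \<xi>"
    unfolding inNproc_def
  proof (intro allI impI)
    fix t assume "t \<le> T"
    show "inN M H A F t (\<xi> t)"
    proof (cases "s \<le> t")
      case True
      with \<zeta> \<open>t \<le> T\<close> have "\<zeta> t \<in> L0A M H A t"
        by (simp add: admissible_def)
      with True show ?thesis
        by (simp add: \<xi>_def inN_F)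
    qed (simp add: \<xi>_def inN_zero)
  qed
  have zero: "inNproc M H A F T (\<lambda>t \<omega>. 0)"
    by (simp add: inNproc_def inN_zero)
  have V_\<xi>: "V \<xi> T \<omega> = tail_sum s \<zeta> \<omega>" for \<omega>
  proof -
    have "V \<xi> T \<omega> = (\<Sum>t\<in>{t\<in>{..T}. s \<le> t}. F t \<omega> (\<zeta> t \<omega>))"
      unfolding V_def \<xi>_def by (rule sum.inter_filter[symmetric]) simp
    also have "{t\<in>{..T}. s \<le> t} = {s..T}"
      by auto
    finally show ?thesis
      by (simp add: tail_sum_def)
  qed
  have V_zero: "V (\<lambda>t \<omega>. 0) T \<omega> = 0" for \<omega>
    by (simp add: V_def)
  from nonneg have "AE \<omega> in M. nonneg_vec (V \<xi> T \<omega> + V (\<lambda>t \<omega>. 0) T \<omega>)"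
    by eventually_elim (simp add: V_\<xi> V_zero nonneg_vec_def less_eq_vec_def)
  then have null: "inN0proc M H A F T \<xi> \<and> (AE \<omega> in M. V \<xi> T \<omega> + V (\<lambda>t \<omega>. 0) T \<omega> = 0)"
    by (rule KP[unfolded KP_def, rule_format, OF \<xi> zero])
  then show "AE \<omega> in M. tail_sum s \<zeta> \<omega> = 0"
    by (simp add: V_\<xi> V_zero)
  fix t assume t: "t \<in> {s..T}"
  with null have "inN0 M H A F t (\<xi> t)"
    by (simp add: inN0proc_def)
  with t have "inN0 M H A F t (\<lambda>\<omega>. F t \<omega> (\<zeta> t \<omega>))"
    by (simp add: \<xi>_def)
  moreover have "\<zeta> t \<in> L0A M H A t"
    using \<zeta> t by (simp add: admissible_def)
  ultimately have "(AE \<omega> in M. F t \<omega> (- \<zeta> t \<omega>) = - F t \<omega> (\<zeta> t \<omega>)) \<and> (AE \<omega> in M. - \<zeta> t \<omega> \<in> A)"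
    using t by (intro HN0[unfolded HN0_def, rule_format]) simp_all
  then show "AE \<omega> in M. F t \<omega> (- \<zeta> t \<omega>) = - F t \<omega> (\<zeta> t \<omega>)" and "AE \<omega> in M. - \<zeta> t \<omega> \<in> A"
    by blast+
qed

lemma symmetric_modification:
  assumes \<zeta>: "admissible s \<zeta>" and sym: "\<And>t. t \<in> {s..T} \<Longrightarrow> AE \<omega> in M. - \<zeta> t \<omega> \<in> A"
  shows "\<exists>\<zeta>'. admissible s \<zeta>' \<and> (\<forall>t\<in>{s..T}. \<forall>\<omega>\<in>space M. - \<zeta>' t \<omega> \<in> A) \<and>
    (AE \<omega> in M. \<forall>t\<in>{s..T}. \<zeta>' t \<omega> = \<zeta> t \<omega>)"
proof (intro exI conjI ballI)
  define \<zeta>' where "\<zeta>' = (\<lambda>t \<omega>. if - \<zeta> t \<omega> \<in> A then \<zeta> t \<omega> else 0)"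
  show "admissible s \<zeta>'"
    unfolding admissible_def
  proof
    fix t assume t: "t \<in> {s..T}"
    have [measurable]: "\<zeta> t \<in> borel_measurable (H t)" and "\<And>\<omega>. \<omega> \<in> space M \<Longrightarrow> \<zeta> t \<omega> \<in> A"
      using \<zeta> t by (simp_all add: admissible_def L0A_def)
    then show "\<zeta>' t \<in> L0A M H A t"
      unfolding L0A_def \<zeta>'_def using zero_in_A by simp measurable
  qed
  show "- \<zeta>' t \<omega> \<in> A" for t \<omega>
    using zero_in_A by (simp add: \<zeta>'_def)
  show "AE \<omega> in M. \<forall>t\<in>{s..T}. \<zeta>' t \<omega> = \<zeta> t \<omega>"
  proof (rule AE_finite_allI)
    fix t assume "t \<in> {s..T}"
    from sym[OF this] show "AE \<omega> in M. \<zeta>' t \<omega> = \<zeta> t \<omega>"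
      by eventually_elim (simp add: \<zeta>'_def)
  qed simp
qed

text \<open>The strategy continuing \<open>u\<close> has non-negative total pay-off, so \<open>KP\<close> and \<open>HN0\<close> make it
  symmetric with vanishing pay-off.\<close>
lemma null_strategy:
  assumes s: "s \<le> T" and u: "u \<in> L0A M H A s" and dom: "dominated (Suc s) (\<lambda>\<omega>. - F s \<omega> (u \<omega>))"
  shows "\<exists>\<zeta>. admissible s \<zeta> \<and> (AE \<omega> in M. \<zeta> s \<omega> = u \<omega>) \<and>
    (\<forall>t\<in>{s..T}. \<forall>\<omega>\<in>space M. - \<zeta> t \<omega> \<in> A) \<and>
    (AE \<omega> in M. \<forall>t\<in>{s..T}. F t \<omega> (- \<zeta> t \<omega>) = - F t \<omega> (\<zeta> t \<omega>)) \<and>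
    (AE \<omega> in M. tail_sum s \<zeta> \<omega> = 0)"
proof -
  obtain \<eta> where \<eta>: "admissible (Suc s) \<eta>"
    and le: "AE \<omega> in M. - F s \<omega> (u \<omega>) \<le> tail_sum (Suc s) \<eta> \<omega>"
    using dom unfolding dominated_def by blast
  define \<zeta>\<^sub>0 where "\<zeta>\<^sub>0 = \<eta>(s := u)"
  have \<zeta>\<^sub>0: "admissible s \<zeta>\<^sub>0"
    unfolding \<zeta>\<^sub>0_def by (rule admissible_fun_upd[OF u \<eta>])
  from le have "AE \<omega> in M. 0 \<le> tail_sum s \<zeta>\<^sub>0 \<omega>"
  proof eventually_elim
    case (elim \<omega>)
    from add_right_mono[OF elim, of "F s \<omega> (u \<omega>)"] show ?case
      by (simp add: \<zeta>\<^sub>0_def tail_sum_fun_upd[OF s] add.commute)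
  qed
  note K = KP_tail_sum_nonneg[OF \<zeta>\<^sub>0 this]
  obtain \<zeta> where \<zeta>: "admissible s \<zeta>" and sym: "\<forall>t\<in>{s..T}. \<forall>\<omega>\<in>space M. - \<zeta> t \<omega> \<in> A"
    and eq: "AE \<omega> in M. \<forall>t\<in>{s..T}. \<zeta> t \<omega> = \<zeta>\<^sub>0 t \<omega>"
    using symmetric_modification[OF \<zeta>\<^sub>0 K(3)] by blast
  have odd: "AE \<omega> in M. \<forall>t\<in>{s..T}. F t \<omega> (- \<zeta>\<^sub>0 t \<omega>) = - F t \<omega> (\<zeta>\<^sub>0 t \<omega>)"
    by (rule AE_finite_allI) (simp_all add: K(2))
  from eq have "AE \<omega> in M. \<zeta> s \<omega> = u \<omega>"
  proof eventually_elim
    case (elim \<omega>)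
    from elim[rule_format, of s] s show ?case
      by (simp add: \<zeta>\<^sub>0_def)
  qed
  moreover from eq odd have "AE \<omega> in M. \<forall>t\<in>{s..T}. F t \<omega> (- \<zeta> t \<omega>) = - F t \<omega> (\<zeta> t \<omega>)"
    by eventually_elim simp
  moreover from eq K(1) have "AE \<omega> in M. tail_sum s \<zeta> \<omega> = 0"
  proof eventually_elim
    case (elim \<omega>)
    have "tail_sum s \<zeta> \<omega> = tail_sum s \<zeta>\<^sub>0 \<omega>"
      by (rule tail_sum_cong) (use elim(1) in blast)
    with elim(2) show ?case
      by simp
  qed
  ultimately show ?thesis
    using \<zeta> sym by blast
qed

lemma tail_sum_shift:
  assumes \<eta>: "admissible s \<eta>" and \<zeta>: "admissible s \<zeta>"
    and \<zeta>_sym: "\<forall>t\<in>{s..T}. \<forall>\<omega>\<in>space M. - \<zeta> t \<omega> \<in> A"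
    and \<beta>: "\<beta> \<in> borel_measurable (H s)"
    and odd: "AE \<omega> in M. \<forall>t\<in>{s..T}. F t \<omega> (- \<zeta> t \<omega>) = - F t \<omega> (\<zeta> t \<omega>)"
    and null: "AE \<omega> in M. tail_sum s \<zeta> \<omega> = 0"
  shows "admissible s (\<lambda>t \<omega>. \<eta> t \<omega> - \<beta> \<omega> *\<^sub>R \<zeta> t \<omega>)"
    and "AE \<omega> in M. tail_sum s \<eta> \<omega> \<le> tail_sum s (\<lambda>t \<omega>. \<eta> t \<omega> - \<beta> \<omega> *\<^sub>R \<zeta> t \<omega>) \<omega>"
proof -
  show "admissible s (\<lambda>t \<omega>. \<eta> t \<omega> - \<beta> \<omega> *\<^sub>R \<zeta> t \<omega>)"
    unfolding admissible_def
  proof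
    fix t assume t: "t \<in> {s..T}"
    have [measurable]: "\<eta> t \<in> borel_measurable (H t)" "\<zeta> t \<in> borel_measurable (H t)"
      using \<eta> \<zeta> t by (simp_all add: admissible_def L0A_def)
    have [measurable]: "\<beta> \<in> borel_measurable (H t)"
      using t by (intro measurable_H_mono[OF _ _ \<beta>]) auto
    have "\<eta> t \<omega> - \<beta> \<omega> *\<^sub>R \<zeta> t \<omega> \<in> A" if "\<omega> \<in> space M" for \<omega>
      using \<eta> \<zeta> t that \<zeta>_sym[rule_format, OF t that]
      by (intro diff_scaleR_in_A) (simp_all add: admissible_def L0A_def)
    then show "(\<lambda>\<omega>. \<eta> t \<omega> - \<beta> \<omega> *\<^sub>R \<zeta> t \<omega>) \<in> L0A M H A t"
      unfolding L0A_def by simp measurable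
  qed
  from AE_classF odd null AE_space
  show "AE \<omega> in M. tail_sum s \<eta> \<omega> \<le> tail_sum s (\<lambda>t \<omega>. \<eta> t \<omega> - \<beta> \<omega> *\<^sub>R \<zeta> t \<omega>) \<omega>"
  proof eventually_elim
    case (elim \<omega>)
    have "tail_sum s \<eta> \<omega> = (\<Sum>t\<in>{s..T}. F t \<omega> (\<eta> t \<omega>) - \<beta> \<omega> *\<^sub>R F t \<omega> (\<zeta> t \<omega>))"
      using elim(3) by (simp add: tail_sum_def sum_subtractf scaleR_sum_right[symmetric])
    also have "\<dots> \<le> tail_sum s (\<lambda>t \<omega>. \<eta> t \<omega> - \<beta> \<omega> *\<^sub>R \<zeta> t \<omega>) \<omega>"
      unfolding tail_sum_def
    proof (rule sum_mono)
      fix t assume t: "t \<in> {s..T}"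
      show "F t \<omega> (\<eta> t \<omega>) - \<beta> \<omega> *\<^sub>R F t \<omega> (\<zeta> t \<omega>) \<le> F t \<omega> (\<eta> t \<omega> - \<beta> \<omega> *\<^sub>R \<zeta> t \<omega>)"
        using \<eta> \<zeta> t elim(1,2,4) \<zeta>_sym[rule_format, OF t elim(4)]
        by (intro classF_diff_scaleR) (simp_all add: admissible_def L0A_def)
    qed
    finally show ?case .
  qed
qed

lemma dominated_limit_shift:
  assumes lim: "dominated_limit s \<eta> h g" and \<zeta>: "admissible s \<zeta>"
    and \<zeta>_sym: "\<forall>t\<in>{s..T}. \<forall>\<omega>\<in>space M. - \<zeta> t \<omega> \<in> A"
    and \<beta>: "\<And>k. \<beta> k \<in> borel_measurable (H s)"
    and odd: "AE \<omega> in M. \<forall>t\<in>{s..T}. F t \<omega> (- \<zeta> t \<omega>) = - F t \<omega> (\<zeta> t \<omega>)"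
    and null: "AE \<omega> in M. tail_sum s \<zeta> \<omega> = 0"
  shows "dominated_limit s (\<lambda>k t \<omega>. \<eta> k t \<omega> - \<beta> k \<omega> *\<^sub>R \<zeta> t \<omega>) h g"
proof -
  have \<eta>: "admissible s (\<eta> k)" for k
    using lim by (simp add: dominated_limit_def)
  note shift = tail_sum_shift[OF \<eta> \<zeta> \<zeta>_sym \<beta> odd null]
  have "AE \<omega> in M. \<forall>k. h k \<omega> \<le> tail_sum s (\<eta> k) \<omega>"
    using lim by (simp add: dominated_limit_def)
  moreover have "AE \<omega> in M. \<forall>k. tail_sum s (\<eta> k) \<omega> \<le> tail_sum s (\<lambda>t \<omega>. \<eta> k t \<omega> - \<beta> k \<omega> *\<^sub>R \<zeta> t \<omega>) \<omega>"
    unfolding AE_all_countable using shift(2) by blast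
  ultimately have "AE \<omega> in M. \<forall>k. h k \<omega> \<le> tail_sum s (\<lambda>t \<omega>. \<eta> k t \<omega> - \<beta> k \<omega> *\<^sub>R \<zeta> t \<omega>) \<omega>"
    by eventually_elim (blast intro: order.trans)
  with lim shift(1) show ?thesis
    by (simp add: dominated_limit_def)
qed

text \<open>Where the controls at time \<open>s\<close> diverge, their normalisations converge along a random
  subsequence to a unit vector \<open>u\<close>; rescaling the dominations by the vanishing weights
  \<open>1 / |\<eta>\<^sub>n\<^sub>s|\<close> shows that \<open>-F\<^sub>s(u)\<close> is dominated, and \<open>u\<close> extends to a symmetric null strategy.\<close>
lemma null_direction:
  assumes s: "s \<le> T" and C: "closed_dominated (Suc s)" and lim: "dominated_limit s \<eta> h g"
  shows "\<exists>\<tau> \<zeta>. random_subseq (H s) \<tau> \<and> admissible s \<zeta> \<and> (\<forall>t\<in>{s..T}. \<forall>\<omega>\<in>space M. - \<zeta> t \<omega> \<in> A) \<and>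
    (AE \<omega> in M. \<forall>t\<in>{s..T}. F t \<omega> (- \<zeta> t \<omega>) = - F t \<omega> (\<zeta> t \<omega>)) \<and>
    (AE \<omega> in M. tail_sum s \<zeta> \<omega> = 0) \<and>
    (AE \<omega> in M. if filterlim (\<lambda>n. \<eta> n s \<omega>) at_infinity sequentially
       then norm (\<zeta> s \<omega>) = 1 \<and> \<zeta> s \<omega> \<in> span (range (\<lambda>k. \<eta> (\<tau> k \<omega>) s \<omega>))
       else convergent (\<lambda>k. \<eta> (\<tau> k \<omega>) s \<omega>))"
proof -
  have space: "space (H s) = space M"
    using s by (rule space_H)
  have \<eta>_s: "\<eta> n s \<in> L0A M H A s" for n
    using lim s by (simp add: dominated_limit_def admissible_def)
  then have \<eta>_meas: "\<eta> n s \<in> borel_measurable (H s)" and \<eta>_A: "\<omega> \<in> space (H s) \<Longrightarrow> \<eta> n s \<omega> \<in> A"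
    for n \<omega>
    using space by (simp_all add: L0A_def)
  define U where "U \<omega> \<longleftrightarrow> filterlim (\<lambda>n. \<eta> n s \<omega>) at_infinity sequentially" for \<omega>
  have [measurable]: "Measurable.pred (H s) U"
    using pred_filterlim_at_infinity[of "\<lambda>n. \<eta> n s", OF \<eta>_meas] by (simp add: U_def[abs_def])
  obtain \<tau> u where \<tau>: "random_subseq (H s) \<tau>" and u_meas: "u \<in> borel_measurable (H s)"
    and u_A: "\<forall>\<omega>\<in>space M. u \<omega> \<in> A"
    and bounded: "\<forall>\<omega>\<in>space M. \<not> U \<omega> \<longrightarrow> convergent (\<lambda>k. \<eta> (\<tau> k \<omega>) s \<omega>) \<and> u \<omega> = 0"
    and weights: "\<forall>\<omega>\<in>space M. U \<omega> \<longrightarrow> (\<lambda>k. 1 / norm (\<eta> (\<tau> k \<omega>) s \<omega>)) \<longlonglongrightarrow> 0"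
    and normalized: "\<forall>\<omega>\<in>space M. U \<omega> \<longrightarrow>
      (\<lambda>k. (1 / norm (\<eta> (\<tau> k \<omega>) s \<omega>)) *\<^sub>R \<eta> (\<tau> k \<omega>) s \<omega>) \<longlonglongrightarrow> u \<omega>"
    and unit: "\<forall>\<omega>\<in>space M. U \<omega> \<longrightarrow> norm (u \<omega>) = 1"
    using random_subseq_normalized[where x = "\<lambda>n. \<eta> n s" and G = "H s" and U = U,
        OF \<eta>_meas closed_A cone_A zero_in_A \<eta>_A U_def, unfolded space]
    by blast
  have u: "u \<in> L0A M H A s"
    using u_meas u_A by (simp add: L0A_def)
  have lim\<^sub>1: "dominated_limit s (\<lambda>k t \<omega>. \<eta> (\<tau> k \<omega>) t \<omega>) (\<lambda>k \<omega>. h (\<tau> k \<omega>) \<omega>) g"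
    by (rule dominated_limit_random_subseq[OF s \<tau> lim])
  have [measurable]: "(\<lambda>\<omega>. \<eta> (\<tau> k \<omega>) s \<omega>) \<in> borel_measurable (H s)" for k
    by (rule measurable_random_subseq[OF \<tau> \<eta>_meas])
  define \<alpha> where "\<alpha> k \<omega> = (if U \<omega> then 1 / norm (\<eta> (\<tau> k \<omega>) s \<omega>) else 0)" for k \<omega>
  have "dominated (Suc s) (\<lambda>\<omega>. - F s \<omega> (u \<omega>))"
  proof (rule dominated_rescaled_limit[where \<alpha> = \<alpha>, OF s C lim\<^sub>1])
    show "\<alpha> k \<in> borel_measurable (H s)" for k
      unfolding \<alpha>_def by measurable
    show "0 \<le> \<alpha> k \<omega>" for k \<omega>
      by (simp add: \<alpha>_def)
    show "(\<lambda>k. \<alpha> k \<omega>) \<longlonglongrightarrow> 0" if "\<omega> \<in> space M" for \<omega>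
      using weights that by (cases "U \<omega>") (simp_all add: \<alpha>_def)
    show "(\<lambda>k. \<alpha> k \<omega> *\<^sub>R \<eta> (\<tau> k \<omega>) s \<omega>) \<longlonglongrightarrow> u \<omega>" if "\<omega> \<in> space M" for \<omega>
      using normalized bounded that by (cases "U \<omega>") (simp_all add: \<alpha>_def)
  qed
  then obtain \<zeta> where \<zeta>: "admissible s \<zeta>" and \<zeta>_u: "AE \<omega> in M. \<zeta> s \<omega> = u \<omega>"
    and rest: "(\<forall>t\<in>{s..T}. \<forall>\<omega>\<in>space M. - \<zeta> t \<omega> \<in> A) \<and>
      (AE \<omega> in M. \<forall>t\<in>{s..T}. F t \<omega> (- \<zeta> t \<omega>) = - F t \<omega> (\<zeta> t \<omega>)) \<and> (AE \<omega> in M. tail_sum s \<zeta> \<omega> = 0)"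
    using null_strategy[OF s u] by blast
  from \<zeta>_u AE_space have "AE \<omega> in M. if U \<omega>
      then norm (\<zeta> s \<omega>) = 1 \<and> \<zeta> s \<omega> \<in> span (range (\<lambda>k. \<eta> (\<tau> k \<omega>) s \<omega>))
      else convergent (\<lambda>k. \<eta> (\<tau> k \<omega>) s \<omega>)"
  proof eventually_elim
    case (elim \<omega>)
    have "u \<omega> \<in> span (range (\<lambda>k. \<eta> (\<tau> k \<omega>) s \<omega>))" if "U \<omega>"
      by (rule LIMSEQ_scaleR_in_span[OF normalized[rule_format, OF elim(2) that]])
    with elim unit bounded show ?case
      by auto
  qed
  with \<tau> \<zeta> rest show ?thesis
    unfolding U_def by blast
qed

lemma dominated_of_dim_Suc:
  assumes s: "s \<le> T" and C: "closed_dominated (Suc s)"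
    and IH: "\<And>\<eta> h g. dominated_limit s \<eta> h g \<Longrightarrow>
      AE \<omega> in M. convergent (\<lambda>n. \<eta> n s \<omega>) \<or> dim (range (\<lambda>n. \<eta> n s \<omega>)) \<le> m \<Longrightarrow> dominated s g"
    and lim: "dominated_limit s \<eta> h g"
    and dim: "AE \<omega> in M. convergent (\<lambda>n. \<eta> n s \<omega>) \<or> dim (range (\<lambda>n. \<eta> n s \<omega>)) \<le> Suc m"
  shows "dominated s g"
proof -
  define U where "U \<omega> \<longleftrightarrow> filterlim (\<lambda>n. \<eta> n s \<omega>) at_infinity sequentially" for \<omega>
  obtain \<tau> \<zeta> where \<tau>: "random_subseq (H s) \<tau>" and \<zeta>: "admissible s \<zeta>"
    and \<zeta>_sym: "\<forall>t\<in>{s..T}. \<forall>\<omega>\<in>space M. - \<zeta> t \<omega> \<in> A"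
    and odd: "AE \<omega> in M. \<forall>t\<in>{s..T}. F t \<omega> (- \<zeta> t \<omega>) = - F t \<omega> (\<zeta> t \<omega>)"
    and null: "AE \<omega> in M. tail_sum s \<zeta> \<omega> = 0"
    and direction: "AE \<omega> in M. if U \<omega>
      then norm (\<zeta> s \<omega>) = 1 \<and> \<zeta> s \<omega> \<in> span (range (\<lambda>k. \<eta> (\<tau> k \<omega>) s \<omega>))
      else convergent (\<lambda>k. \<eta> (\<tau> k \<omega>) s \<omega>)"
    using null_direction[OF s C lim] unfolding U_def by blast
  define \<eta>\<^sub>1 where "\<eta>\<^sub>1 = (\<lambda>k t \<omega>. \<eta> (\<tau> k \<omega>) t \<omega>)"
  have lim\<^sub>1: "dominated_limit s \<eta>\<^sub>1 (\<lambda>k \<omega>. h (\<tau> k \<omega>) \<omega>) g"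
    unfolding \<eta>\<^sub>1_def by (rule dominated_limit_random_subseq[OF s \<tau> lim])
  have [measurable]: "\<eta> n s \<in> borel_measurable (H s)" for n
    using lim s by (simp add: dominated_limit_def admissible_def L0A_def)
  have [measurable]: "\<eta>\<^sub>1 k s \<in> borel_measurable (H s)" "\<zeta> s \<in> borel_measurable (H s)" for k
    using lim\<^sub>1 \<zeta> s by (simp_all add: dominated_limit_def admissible_def L0A_def)
  have [measurable]: "Measurable.pred (H s) U"
    using pred_filterlim_at_infinity[of "\<lambda>n. \<eta> n s" "H s"] by (simp add: U_def[abs_def])
  define \<beta> where "\<beta> k \<omega> = (if U \<omega> then \<eta>\<^sub>1 k s \<omega> \<bullet> \<zeta> s \<omega> else 0)" for k \<omega>
  have "dominated_limit s (\<lambda>k t \<omega>. \<eta>\<^sub>1 k t \<omega> - \<beta> k \<omega> *\<^sub>R \<zeta> t \<omega>) (\<lambda>k \<omega>. h (\<tau> k \<omega>) \<omega>) g"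
    by (rule dominated_limit_shift[OF lim\<^sub>1 \<zeta> \<zeta>_sym _ odd null]) (simp add: \<beta>_def)
  moreover from dim direction
  have "AE \<omega> in M. convergent (\<lambda>k. \<eta>\<^sub>1 k s \<omega> - \<beta> k \<omega> *\<^sub>R \<zeta> s \<omega>) \<or>
    dim (range (\<lambda>k. \<eta>\<^sub>1 k s \<omega> - \<beta> k \<omega> *\<^sub>R \<zeta> s \<omega>)) \<le> m"
  proof eventually_elim
    case (elim \<omega>)
    show ?case
    proof (cases "U \<omega>")
      case False
      with elim(2) show ?thesis
        by (simp add: \<eta>\<^sub>1_def \<beta>_def)
    next
      case True
      then have "\<not> convergent (\<lambda>n. \<eta> n s \<omega>)"
        using not_tendsto_and_filterlim_at_infinity[of sequentially "\<lambda>n. \<eta> n s \<omega>"]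
        by (auto simp: U_def convergent_def)
      with elim(1) have "dim (range (\<lambda>n. \<eta> n s \<omega>)) \<le> Suc m"
        by blast
      moreover have "dim (range (\<lambda>k. \<eta>\<^sub>1 k s \<omega>)) \<le> dim (range (\<lambda>n. \<eta> n s \<omega>))"
        by (rule dim_subset) (auto simp: \<eta>\<^sub>1_def)
      moreover have "dim (range (\<lambda>k. \<eta>\<^sub>1 k s \<omega> - \<beta> k \<omega> *\<^sub>R \<zeta> s \<omega>)) < dim (range (\<lambda>k. \<eta>\<^sub>1 k s \<omega>))"
        using True elim(2) dim_range_orthogonal_less[of "\<zeta> s \<omega>" "\<lambda>k. \<eta>\<^sub>1 k s \<omega>"]
        by (simp add: \<beta>_def \<eta>\<^sub>1_def)
      ultimately show ?thesis
        by linarith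
    qed
  qed
  ultimately show ?thesis
    by (rule IH)
qed

lemma dominated_of_dim:
  assumes "s \<le> T" and "closed_dominated (Suc s)" and "dominated_limit s \<eta> h g"
    and "AE \<omega> in M. convergent (\<lambda>n. \<eta> n s \<omega>) \<or> dim (range (\<lambda>n. \<eta> n s \<omega>)) \<le> m"
  shows "dominated s g"
  using assms(3,4)
proof (induction m arbitrary: \<eta> h g)
  case 0
  from 0(2) have "AE \<omega> in M. convergent (\<lambda>n. \<eta> n s \<omega>)"
  proof eventually_elim
    case (elim \<omega>)
    show ?case
    proof (cases "convergent (\<lambda>n. \<eta> n s \<omega>)")
      case False
      with elim have "range (\<lambda>n. \<eta> n s \<omega>) \<subseteq> {0}"
        by simp
      then have "(\<lambda>n. \<eta> n s \<omega>) = (\<lambda>n. 0)"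
        by auto
      then show ?thesis
        by (simp add: convergent_const)
    qed
  qed
  with assms(1,2) 0(1) show ?case
    by (rule dominated_of_convergent)
next
  case (Suc m)
  with assms(1,2) show ?case
    by (rule dominated_of_dim_Suc)
qed

lemma closed_dominated_Suc:
  assumes "s \<le> T" and "closed_dominated (Suc s)"
  shows "closed_dominated s"
  unfolding closed_dominated_def
proof (intro allI impI)
  fix \<eta> h g assume "dominated_limit s \<eta> h g"
  then show "dominated s g"
    by (rule dominated_of_dim[OF assms, where m = "DIM('d mat)"])
      (intro always_eventually allI disjI2 dim_subset_UNIV)
qed

lemma closed_dominated_0: "closed_dominated 0"
proof -
  have "closed_dominated (Suc T - j)" if "j \<le> Suc T" for j
    using that
  proof (induction j)
    case (Suc j)
    then show ?case
      using closed_dominated_Suc[of "T - j"] by (simp add: Suc_diff_le)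
  qed (simp add: closed_dominated_beyond)
  from this[of "Suc T"] show ?thesis
    by simp
qed

lemma dominated_of_inAT:
  assumes "inAT M H A F T g"
  shows "dominated 0 g"
proof -
  obtain \<xi> r where \<xi>: "inNproc M H A F T \<xi>" and r: "\<forall>\<omega>\<in>space M. nonneg_vec (r \<omega>)"
    and g: "AE \<omega> in M. g \<omega> = V \<xi> T \<omega> - r \<omega>"
    using assms unfolding inAT_def by blast
  have "\<forall>t. \<exists>\<eta>. t \<le> T \<longrightarrow> \<eta> \<in> L0A M H A t \<and> (AE \<omega> in M. \<xi> t \<omega> = F t \<omega> (\<eta> \<omega>))"
    using \<xi> unfolding inNproc_def inN_def by blast
  from choice[OF this] obtain \<eta> where \<eta>: "\<And>t. t \<le> T \<Longrightarrow> \<eta> t \<in> L0A M H A t"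
    and \<xi>_eq: "\<And>t. t \<le> T \<Longrightarrow> AE \<omega> in M. \<xi> t \<omega> = F t \<omega> (\<eta> t \<omega>)"
    by blast
  have "AE \<omega> in M. \<forall>t\<in>{..T}. \<xi> t \<omega> = F t \<omega> (\<eta> t \<omega>)"
    by (rule AE_finite_allI) (simp_all add: \<xi>_eq)
  from this g AE_space have "AE \<omega> in M. g \<omega> \<le> tail_sum 0 \<eta> \<omega>"
  proof eventually_elim
    case (elim \<omega>)
    have "V \<xi> T \<omega> = tail_sum 0 \<eta> \<omega>"
      unfolding V_def tail_sum_def atLeast0AtMost by (rule sum.cong) (use elim(1) in simp_all)
    moreover have "0 \<le> r \<omega>"
      using r elim(3) by (simp add: nonneg_vec_def less_eq_vec_def)
    ultimately show ?case
      using elim(2) by simp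
  qed
  moreover have "admissible 0 \<eta>"
    using \<eta> by (simp add: admissible_def)
  ultimately show ?thesis
    by (intro dominatedI)
qed

lemma inAT_of_dominated:
  assumes g: "g \<in> borel_measurable M" and dom: "dominated 0 g"
  shows "inAT M H A F T g"
proof -
  obtain \<eta> where \<eta>: "admissible 0 \<eta>" and le: "AE \<omega> in M. g \<omega> \<le> tail_sum 0 \<eta> \<omega>"
    using dom unfolding dominated_def by blast
  define \<xi> where "\<xi> = (\<lambda>t \<omega>. F t \<omega> (\<eta> t \<omega>))"
  have V_eq: "V \<xi> T \<omega> = tail_sum 0 \<eta> \<omega>" for \<omega>
    by (simp add: V_def \<xi>_def tail_sum_def atLeast0AtMost)
  have \<xi>_N: "inNproc M H A F T \<xi>"
    using \<eta> by (simp add: inNproc_def admissible_def \<xi>_def inN_F)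
  have "(\<lambda>\<omega>. F t \<omega> (\<eta> t \<omega>)) \<in> borel_measurable M" if "t \<le> T" for t
    using \<eta> that by (intro borel_measurable_F_apply measurable_H_imp_M[of t])
      (simp_all add: admissible_def L0A_def)
  then have [measurable]: "V \<xi> T \<in> borel_measurable M"
    unfolding V_def \<xi>_def by (intro borel_measurable_sum) simp
  define r where "r \<omega> = (if nonneg_vec (V \<xi> T \<omega> - g \<omega>) then V \<xi> T \<omega> - g \<omega> else 0)" for \<omega>
  have "r \<in> borel_measurable M"
    unfolding r_def nonneg_vec_def using g by measurable
  moreover have "\<forall>\<omega>\<in>space M. nonneg_vec (r \<omega>)"
    by (simp add: r_def nonneg_vec_def)
  moreover from le have "AE \<omega> in M. g \<omega> = V \<xi> T \<omega> - r \<omega>"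
    by eventually_elim (simp add: r_def V_eq nonneg_vec_def less_eq_vec_def)
  ultimately show ?thesis
    unfolding inAT_def using g \<xi>_N by blast
qed

end

theorem mainTheorem1:
  fixes M :: "'w measure" and H :: "nat \<Rightarrow> 'w measure" and T :: nat
    and A :: "('d::finite) mat set" and F :: "nat \<Rightarrow> 'w \<Rightarrow> 'd mat \<Rightarrow> 'd vect"
    and g :: "nat \<Rightarrow> 'w \<Rightarrow> 'd vect" and g0 :: "'w \<Rightarrow> 'd vect"
  assumes "prob_space M" and "complete_measure M"
    and "\<forall>t\<le>T. subalgebra M (H t)"
    and "\<forall>s t. s \<le> t \<longrightarrow> t \<le> T \<longrightarrow> sets (H s) \<subseteq> sets (H t)"
    and "closed A" and "convex A" and "cone A"
    and "randomF M A F"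
    and "KP M H A F T" and "HN0 M H A F T"
    and "\<forall>n. inAT M H A F T (g n)"
    and "g0 \<in> borel_measurable M"
    and "conv_in_prob M g g0"
  shows "inAT M H A F T g0"
proof -
  have "A \<noteq> {}"
    using nonempty_if_inAT[OF assms(1)] assms(11) by blast
  with assms(6,7) have "convex_cone A"
    by (simp add: convex_cone_def conic_def cone_def)
  then interpret closedness_setting M H T A F
    using assms by (intro closedness_setting.intro) simp_all
  have "g n \<in> borel_measurable M" for n
    using assms(11) by (simp add: inAT_def)
  then obtain \<sigma> where \<sigma>: "AE \<omega> in M. (\<lambda>k. g (\<sigma> k) \<omega>) \<longlonglongrightarrow> g0 \<omega>"
    using conv_in_prob_AE_subseq[OF assms(1) _ assms(12,13)] by blast
  have "dominated 0 g0"
    by (rule closed_dominatedD[OF closed_dominated_0 _ \<sigma>])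
      (use assms(11) dominated_of_inAT in blast)
  with assms(12) show ?thesis
    by (rule inAT_of_dominated)
qed

end
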